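(* Let $\Omega$, $\beta$, $r=1/\beta$ satisfy the curvature assumption $r<r_0/2$, suppose the magnetic billiard in $\Omega$ admits a polynomial in momenta integral $\Phi$, and let $F$ be the corresponding function on $\overline{\Omega_r}$ defined by $F\circ\mathcal{L}=\Phi$. Then $F$ is constant on $\gamma_{+r}$ and $F$ is constant on $\gamma_{-r}$.
   Context: $\Omega\subset\mathbb{R}^2$ is a bounded domain with boundary $\gamma$ a simple closed $C^\infty$ curve parametrized counterclockwise by arc length; $J$ is the counterclockwise rotation by $\pi/2$, $n=J\dot\gamma$, $\gamma_t=\gamma+t\,n$, and $r_0$ is the largest radius for which the tubular neighbourhood of $\gamma$ is diffeomorphic to its normal bundle. Magnetic billiard: a particle moves in $\Omega$ with unit speed along arcs of circles of radius $r$ traversed counterclockwise (Larmor arcs), reflected at $\gamma$ by $v\mapsto v-2\langle n,v\rangle n$; $g^t$ is the flow on unit tangent vectors. $\Omega_+$ is the closed annulus bounded by $\gamma$ and $\gamma_{+2r}$. A polynomial in momenta integral is $\Phi(x,v)=\sum_{0\le k+l\le N}a_{kl}(x)v_1^kv_2^l$ on unit tangent vectors over $\Omega_+$, $a_{kl}\in C^\infty(\overline{\Omega_+})$, such that (1) $\Phi(g^t(x,v))=\Phi(x,v)$ between collisions for $x\in\gamma$, $v$ inward unit, and (2) $\Phi(x,v)=\Phi(x,v-2\langle n,v\rangle n)$ for $x\in\partial\Omega$. $\Omega_r$ is the annulus bounded by $\gamma_{+r}$ and $\gamma_{-r}$ (the set of centers of radius-$r$ circles meeting $\gamma$), $\mathcal{L}(x,v)=x+rJv$,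 and $F(x+rJv)=\Phi(x,v)$ for unit vectors tangent to Larmor arcs inside $\Omega$ meeting $\partial\Omega$ (well defined since $\Phi$ is constant on Larmor arcs), extended to $\overline{\Omega_r}$ by continuity. *)

theory Defs
  imports "HOL-Complex_Analysis.Complex_Analysis"
begin

text \<open>The plane is identified with the complex numbers; J (rotation by pi/2) is
multiplication by the imaginary unit.\<close>

definition smooth_curve :: "(real \<Rightarrow> complex) \<Rightarrow> bool" where
  "smooth_curve \<gamma> \<longleftrightarrow> (\<exists>D::nat \<Rightarrow> real \<Rightarrow> complex. D 0 = \<gamma> \<and>
      (\<forall>k t. (D k has_vector_derivative D (Suc k) t) (at t)))"

definition tangent :: "(real \<Rightarrow> complex) \<Rightarrow> real \<Rightarrow> complex" where
  "tangent \<gamma> t = vector_derivative \<gamma> (at t)"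

definition normal :: "(real \<Rightarrow> complex) \<Rightarrow> real \<Rightarrow> complex" where
  "normal \<gamma> t = \<i> * tangent \<gamma> t"

definition curvature :: "(real \<Rightarrow> complex) \<Rightarrow> real \<Rightarrow> real" where
  "curvature \<gamma> t = Re (cnj (normal \<gamma> t) * vector_derivative (tangent \<gamma>) (at t))"

definition offset :: "(real \<Rightarrow> complex) \<Rightarrow> real \<Rightarrow> real \<Rightarrow> complex" where
  "offset \<gamma> s t = \<gamma> t + complex_of_real s * normal \<gamma> t"

text \<open>The normal map (t,s) |-> gamma(t) + s n(t) on [0,L) x (-rho,rho) is a
diffeomorphism onto its image: injective with non-singular Jacobian (1 - s kappa /= 0).\<close>
definition tube_ok :: "(real \<Rightarrow> complex) \<Rightarrow> real \<Rightarrow> real \<Rightarrow> bool" where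
  "tube_ok \<gamma> L \<rho> \<longleftrightarrow>
     (\<forall>t s t' s'. t \<in> {0..<L} \<and> t' \<in> {0..<L} \<and> \<bar>s\<bar> < \<rho> \<and> \<bar>s'\<bar> < \<rho> \<and>
         offset \<gamma> s t = offset \<gamma> s' t' \<longrightarrow> t = t' \<and> s = s') \<and>
     (\<forall>t s. \<bar>s\<bar> < \<rho> \<longrightarrow> 1 - s * curvature \<gamma> t \<noteq> 0)"

definition tubular_radius :: "(real \<Rightarrow> complex) \<Rightarrow> real \<Rightarrow> real" where
  "tubular_radius \<gamma> L = Sup {\<rho>. 0 < \<rho> \<and> tube_ok \<gamma> L \<rho>}"

text \<open>C-infinity on an open set: all iterated partial derivatives exist.\<close>
definition smooth_on :: "complex set \<Rightarrow> (complex \<Rightarrow> real) \<Rightarrow> bool" where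
  "smooth_on U f \<longleftrightarrow> (\<exists>S. f \<in> S \<and> (\<forall>g\<in>S. \<exists>g1\<in>S. \<exists>g2\<in>S. \<forall>z\<in>U.
      (g has_derivative (\<lambda>h. Re h * g1 z + Im h * g2 z)) (at z)))"

definition smooth_on_closed :: "complex set \<Rightarrow> (complex \<Rightarrow> real) \<Rightarrow> bool" where
  "smooth_on_closed S f \<longleftrightarrow> (\<exists>U g. open U \<and> S \<subseteq> U \<and> smooth_on U g \<and> (\<forall>z\<in>S. g z = f z))"

definition Omega_plus :: "(real \<Rightarrow> complex) \<Rightarrow> real \<Rightarrow> complex set" where
  "Omega_plus \<gamma> r = {offset \<gamma> s t | s t. s \<in> {0..2*r}}"

definition Omega_r_closed :: "(real \<Rightarrow> complex) \<Rightarrow> real \<Rightarrow> complex set" where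
  "Omega_r_closed \<gamma> r = {offset \<gamma> s t | s t. s \<in> {-r..r}}"

definition poly_mom :: "(nat \<Rightarrow> nat \<Rightarrow> complex \<Rightarrow> real) \<Rightarrow> nat \<Rightarrow> complex \<Rightarrow> complex \<Rightarrow> real" where
  "poly_mom a N x v = (\<Sum>(k,l)\<in>{(k,l). k + l \<le> N}. a k l x * Re v ^ k * Im v ^ l)"

text \<open>Larmor arc of radius r through (x,v), traversed counterclockwise with unit speed;
its centre is x + r J v.\<close>
definition larmor_pos :: "real \<Rightarrow> complex \<Rightarrow> complex \<Rightarrow> real \<Rightarrow> complex" where
  "larmor_pos r x v s = x + \<i> * of_real r * v - \<i> * of_real r * v * exp (\<i> * of_real (s / r))"

definition larmor_vel :: "real \<Rightarrow> complex \<Rightarrow> real \<Rightarrow> complex" where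
  "larmor_vel r v s = v * exp (\<i> * of_real (s / r))"

definition reflect :: "complex \<Rightarrow> complex \<Rightarrow> complex" where
  "reflect n v = v - 2 * of_real (Re (cnj n * v)) * n"

definition poly_integral ::
  "(real \<Rightarrow> complex) \<Rightarrow> complex set \<Rightarrow> real \<Rightarrow> (nat \<Rightarrow> nat \<Rightarrow> complex \<Rightarrow> real) \<Rightarrow> nat \<Rightarrow> bool" where
  "poly_integral \<gamma> \<Omega> r a N \<longleftrightarrow>
     (\<forall>k l. k + l \<le> N \<longrightarrow> smooth_on_closed (Omega_plus \<gamma> r) (a k l)) \<and>
     (\<forall>t v s. norm v = 1 \<and> Re (cnj (normal \<gamma> t) * v) > 0 \<and> 0 \<le> s \<and>
        (\<forall>s'\<in>{0<..<s}. larmor_pos r (\<gamma> t) v s' \<in> \<Omega>) \<longrightarrow>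
        poly_mom a N (larmor_pos r (\<gamma> t) v s) (larmor_vel r v s) = poly_mom a N (\<gamma> t) v) \<and>
     (\<forall>t v. norm v = 1 \<longrightarrow>
        poly_mom a N (\<gamma> t) v = poly_mom a N (\<gamma> t) (reflect (normal \<gamma> t) v))"

end

theory Submission
  imports Defs
begin

(*
  Write Phi(s, v) for the integral at the boundary point gamma(s) with velocity v.
  The normal n(s) points into Omega: near gamma(s) the winding number of the boundary differs by a
  locally constant amount from that of a small clockwise loop formed by the arc of gamma around
  gamma(s) and a detour below it, and the points gamma(s) + e n(s) lie outside that loop.  The
  Larmor arcs starting at gamma(s) + e n(s) with velocity v have centres tending to gamma(s) + i r v,
  so F(gamma(s) + i r v) = Phi(s, v) for every unit vector v (for tangential v by continuity).
  Hence Phi takes the same value at two boundary points whenever the corresponding Larmor circles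
  have the same centre.  Along the lift s |-> (s, +-gamma'(s)) the derivative of Phi vanishes: in
  the direction (0, i gamma') by the reflection law, which exchanges +-gamma' cis t and
  +-gamma' cis (-t); in the direction (1, i gamma'/r) because the circles through gamma(t) and
  gamma(t + d) with a common centre have velocities differing by i d gamma'(t)/r + O(d^2).  Since
  gamma'' is a multiple of i gamma', Phi(s, +-gamma'(s)) is constant, and it is the value of F on
  the parallel curve gamma_{+-r}.
*)

section \<open>Elementary analysis in the plane\<close>

lemma winding_number_neg_lt:
  assumes g: "valid_path g" "z \<notin> path_image g" and e: "0 < e"
    and g': "\<And>x. 0 < x \<Longrightarrow> x < 1 \<Longrightarrow> (g has_vector_derivative g' x) (at x)"
    and clockwise: "\<And>x. 0 < x \<Longrightarrow> x < 1 \<Longrightarrow> Im (g' x * cnj (g x - z)) \<le> - e"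
  shows "Re (winding_number g z) < 0"
proof -
  have "0 < Re (winding_number (reversepath g) z)"
  proof (rule winding_number_pos_lt[OF _ _ e])
    show "valid_path (reversepath g)" "z \<notin> path_image (reversepath g)"
      using g by simp_all
    fix x :: real assume x: "0 < x" "x < 1"
    have "((g \<circ> (\<lambda>x. 1 - x)) has_vector_derivative (-1) *\<^sub>R g' (1 - x)) (at x)"
      by (rule vector_diff_chain_at) (auto intro!: derivative_eq_intros g' simp: x)
    then have "vector_derivative (reversepath g) (at x) = - g' (1 - x)"
      unfolding reversepath_def by (simp add: o_def vector_derivative_at)
    then show "e \<le> Im (vector_derivative (reversepath g) (at x) * cnj (reversepath g x - z))"
      using clockwise[of "1 - x"] x by (simp add: reversepath_def)
  qed
  moreover have "winding_number (reversepath g) z = - winding_number g z"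
    using g by (simp add: winding_number_reversepath valid_path_imp_path)
  ultimately show ?thesis by simp
qed

lemma norm_diff_le_vector_derivative_bound:
  fixes f :: "real \<Rightarrow> 'a::real_normed_vector"
  assumes "a \<le> b" and f': "\<And>x. x \<in> {a..b} \<Longrightarrow> (f has_vector_derivative f' x) (at x)"
    and bound: "\<And>x. x \<in> {a..b} \<Longrightarrow> norm (f' x) \<le> B"
  shows "norm (f b - f a) \<le> B * (b - a)"
proof -
  have "norm (f b - f a) \<le> B * norm (b - a)"
  proof (rule differentiable_bound[of "{a..b}" f "\<lambda>x h. h *\<^sub>R f' x"])
    show "(f has_derivative (\<lambda>h. h *\<^sub>R f' x)) (at x within {a..b})" if "x \<in> {a..b}" for x
      using f'[OF that] unfolding has_vector_derivative_def by (rule has_derivative_at_withinI)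
    show "onorm (\<lambda>h. h *\<^sub>R f' x) \<le> B" if "x \<in> {a..b}" for x
      using bound[OF that] by (simp add: onorm_scaleR_left[OF bounded_linear_ident] onorm_id)
  qed (use \<open>a \<le> b\<close> in auto)
  with \<open>a \<le> b\<close> show ?thesis by simp
qed

lemma norm_sgn_diff_le:
  fixes x u :: "'a::real_normed_vector"
  assumes "norm u = 1"
  shows "norm (sgn x - u) \<le> 2 * norm (x - u)"
proof -
  have "norm (sgn x - x) \<le> norm (x - u)"
  proof (cases "x = 0")
    case False
    then have "sgn x - x = (1 - norm x) *\<^sub>R sgn x"
      by (simp add: sgn_div_norm algebra_simps)
    then have "norm (sgn x - x) = \<bar>norm u - norm x\<bar>"
      using False assms by (simp add: norm_sgn)
    also have "\<dots> \<le> norm (x - u)"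
      by (metis norm_minus_commute norm_triangle_ineq3)
    finally show ?thesis .
  qed (use assms in simp)
  then show ?thesis
    using norm_triangle_ineq[of "sgn x - x" "x - u"] by simp
qed

lemma one_minus_sqrt_le: "0 \<le> y \<Longrightarrow> y \<le> 1 \<Longrightarrow> 1 - sqrt (1 - y) \<le> y"
  by (smt (verit) mult_left_le real_sqrt_ge_one real_le_rsqrt power2_eq_square)

lemma unit_vectors_with_difference:
  fixes c :: complex and \<sigma> :: real
  assumes "c \<noteq> 0" "norm c \<le> 2" "\<bar>\<sigma>\<bar> = 1"
  obtains v1 v2 where "norm v1 = 1" "norm v2 = 1" "v2 - v1 = \<i> * c"
    "norm (v1 - of_real \<sigma> * sgn c) \<le> norm c" "norm (v2 - of_real \<sigma> * sgn c) \<le> 2 * norm c"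
proof -
  define h where "h = norm c / 2"
  define s where "s = sqrt (1 - h\<^sup>2)"
  have h: "0 < h" "h \<le> 1" using assms by (simp_all add: h_def)
  then have s: "s\<^sup>2 + h\<^sup>2 = 1" "1 - s \<le> h\<^sup>2" "s \<le> 1"
    using one_minus_sqrt_le[of "h\<^sup>2"] by (simp_all add: s_def power_le_one)
  define v1 where "v1 = sgn c * Complex (\<sigma> * s) (- h)"
  define v2 where "v2 = sgn c * Complex (\<sigma> * s) h"
  have "\<sigma> * \<sigma> = 1" using assms(3) abs_mult_self_eq[of \<sigma>] by simp
  then have unit: "norm (Complex (\<sigma> * s) y) = 1" if "y\<^sup>2 = h\<^sup>2" for y
    using s(1) that by (simp add: complex_norm power2_eq_square) (metis mult.assoc mult.left_commute mult_1)
  have "v2 - v1 = sgn c * of_real (norm c) * \<i>"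
    by (simp add: v1_def v2_def complex_eq_iff h_def algebra_simps)
  also have "sgn c * of_real (norm c) = c"
    using assms(1) by (simp add: sgn_div_norm scaleR_conv_of_real)
  finally have diff: "v2 - v1 = \<i> * c" by simp
  have "v1 - of_real \<sigma> * sgn c = sgn c * (Complex (\<sigma> * s) (- h) - of_real \<sigma>)"
    by (simp add: v1_def algebra_simps)
  also have "Complex (\<sigma> * s) (- h) - of_real \<sigma> = Complex (\<sigma> * (s - 1)) (- h)"
    by (simp add: complex_eq_iff algebra_simps)
  finally have "norm (v1 - of_real \<sigma> * sgn c) = norm (Complex (\<sigma> * (s - 1)) (- h))"
    using assms(1) by (simp add: norm_mult norm_sgn)
  then have "norm (v1 - of_real \<sigma> * sgn c) \<le> \<bar>s - 1\<bar> + h"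
    using assms(3) cmod_le[of "Complex (\<sigma> * (s - 1)) (- h)"] h by (simp add: abs_mult)
  also have "\<dots> \<le> h\<^sup>2 + h" using s by simp
  also have "\<dots> \<le> 2 * h" using h mult_left_le_one_le[of h h] by (simp add: power2_eq_square)
  also have "\<dots> = norm c" by (simp add: h_def)
  finally have close: "norm (v1 - of_real \<sigma> * sgn c) \<le> norm c" .
  show thesis
  proof
    show "norm v1 = 1" "norm v2 = 1"
      using assms(1) unit[of h] unit[of "- h"] by (simp_all add: v1_def v2_def norm_mult norm_sgn)
    show "norm (v2 - of_real \<sigma> * sgn c) \<le> 2 * norm c"
      using norm_triangle_ineq[of "v1 - of_real \<sigma> * sgn c" "\<i> * c"] close diff
      by (simp add: norm_mult algebra_simps)
  qed fact+
qed

lemma larmor_velocities_with_common_centre: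
  fixes d T :: complex
  assumes "0 < r" "\<bar>\<sigma>\<bar> = 1" "d \<noteq> 0" "norm d \<le> \<delta>" "\<delta> \<le> 2 * r"
  obtains v1 v2 where "norm v1 = 1" "norm v2 = 1" "p + \<i> * of_real r * v1 = (p + d) + \<i> * of_real r * v2"
    "norm (v1 - of_real \<sigma> * T) \<le> 2 * \<delta> / r + norm (sgn d - T)"
    "norm (v2 - of_real \<sigma> * T) \<le> 2 * \<delta> / r + norm (sgn d - T)"
    "norm (v2 - v1 - \<delta> *\<^sub>R (\<i> * T / of_real r)) = norm (d - \<delta> *\<^sub>R T) / r"
proof -
  have "norm (d / of_real r) \<le> 2" using assms(1,4,5) by (simp add: norm_divide divide_le_eq)
  then obtain v1 v2 where v: "norm v1 = 1" "norm v2 = 1" "v2 - v1 = \<i> * (d / of_real r)"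
    "norm (v1 - of_real \<sigma> * sgn d) \<le> norm d / r" "norm (v2 - of_real \<sigma> * sgn d) \<le> 2 * (norm d / r)"
    using unit_vectors_with_difference[of "d / of_real r" \<sigma>] assms(1-3)
    by (auto simp: norm_divide sgn_divide sgn_of_real)
  have "0 \<le> \<delta>" using assms(4) norm_ge_zero order_trans by blast
  then have "norm d / r \<le> \<delta> / r" "\<delta> / r \<le> 2 * \<delta> / r"
    using assms(1,4) by (simp_all add: divide_right_mono)
  moreover have "norm (of_real \<sigma> * sgn d - of_real \<sigma> * T) = norm (sgn d - T)"
    using assms(2) by (simp add: norm_mult flip: right_diff_distrib)
  ultimately have "norm (v1 - of_real \<sigma> * T) \<le> 2 * \<delta> / r + norm (sgn d - T)"
    "norm (v2 - of_real \<sigma> * T) \<le> 2 * \<delta> / r + norm (sgn d - T)"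
    using norm_triangle_ineq[of "v1 - of_real \<sigma> * sgn d" "of_real \<sigma> * sgn d - of_real \<sigma> * T"]
      norm_triangle_ineq[of "v2 - of_real \<sigma> * sgn d" "of_real \<sigma> * sgn d - of_real \<sigma> * T"] v(4,5)
    by simp_all
  moreover have "\<i> * of_real r * v2 = \<i> * of_real r * v1 + (\<i> * \<i>) * d"
    using v(3) assms(1) by (simp add: field_simps eq_diff_eq')
  moreover have "v2 - v1 - \<delta> *\<^sub>R (\<i> * T / of_real r) = \<i> * (d - \<delta> *\<^sub>R T) / of_real r"
    using v(3) by (simp add: scaleR_conv_of_real algebra_simps diff_divide_distrib)
  then have "norm (v2 - v1 - \<delta> *\<^sub>R (\<i> * T / of_real r)) = norm (d - \<delta> *\<^sub>R T) / r"
    using assms(1) by (simp add: norm_mult norm_divide)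
  ultimately show thesis using that v(1,2) by simp
qed

lemma has_derivative_zero_if_symmetric:
  fixes f :: "'a::real_normed_vector \<Rightarrow> 'b::real_normed_vector"
  assumes f: "(f has_derivative D) (at x)"
    and p: "(p has_vector_derivative u) (at 0)" "p 0 = x"
    and q: "(q has_vector_derivative - u) (at 0)" "q 0 = x"
    and symmetric: "\<And>\<theta>. f (p \<theta>) = f (q \<theta>)"
  shows "D u = 0"
proof -
  have "((f \<circ> p) has_derivative D \<circ> (\<lambda>h. h *\<^sub>R u)) (at 0)"
    using p f unfolding has_vector_derivative_def by (intro diff_chain_at) auto
  moreover have "((f \<circ> p) has_derivative D \<circ> (\<lambda>h. h *\<^sub>R - u)) (at 0)"
  proof -
    have "f \<circ> p = f \<circ> q" using symmetric by auto
    then show ?thesis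
      using q f unfolding has_vector_derivative_def by (metis diff_chain_at)
  qed
  ultimately have "D \<circ> (\<lambda>h. h *\<^sub>R u) = D \<circ> (\<lambda>h. h *\<^sub>R - u)"
    by (rule has_derivative_unique)
  from fun_cong[OF this, of 1] have "D u = D (- u)" by simp
  also have "\<dots> = - D u" using linear_neg[OF has_derivative_linear[OF f]] by simp
  finally have "(2::real) *\<^sub>R D u = 0" by (simp add: scaleR_2 eq_neg_iff_add_eq_0)
  then show ?thesis by simp
qed

lemma has_derivative_level_chord:
  fixes f :: "'a::real_normed_vector \<Rightarrow> 'b::real_normed_vector"
  assumes f: "(f has_derivative D) (at x)" and "0 < e"
  obtains d where "0 < d" "\<And>y z. norm (y - x) < d \<Longrightarrow> norm (z - x) < d \<Longrightarrow> f y = f z \<Longrightarrow>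
      norm (D (z - y)) \<le> e * norm (y - x) + e * norm (z - x)"
proof -
  obtain d where d: "0 < d" "\<And>y. norm (y - x) < d \<Longrightarrow> norm (f y - f x - D (y - x)) \<le> e * norm (y - x)"
    using f \<open>0 < e\<close> unfolding has_derivative_at_alt by blast
  have "norm (D (z - y)) \<le> e * norm (y - x) + e * norm (z - x)"
    if "norm (y - x) < d" "norm (z - x) < d" "f y = f z" for y z
  proof -
    have "D (z - y) = D (z - x) - D (y - x)"
      using linear_diff[OF has_derivative_linear[OF f], of "z - x" "y - x"] by simp
    then have "D (z - y) = (f y - f x - D (y - x)) - (f z - f x - D (z - x))"
      using that(3) by (simp add: algebra_simps)
    then have "norm (D (z - y)) \<le> norm (f y - f x - D (y - x)) + norm (f z - f x - D (z - x))"
      by (metis norm_triangle_ineq4)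
    then show ?thesis using d(2)[OF that(1)] d(2)[OF that(2)] by linarith
  qed
  with d(1) that show thesis by blast
qed

lemma norm_linear_le_chord:
  fixes D :: "'a::real_normed_vector \<Rightarrow> 'b::real_normed_vector"
  assumes "linear D" "\<And>v. norm (D v) \<le> norm v * K" "0 < \<delta>"
  shows "norm (D h) \<le> norm (D (z - y)) / \<delta> + norm (z - y - \<delta> *\<^sub>R h) * K / \<delta>"
proof -
  have "\<delta> *\<^sub>R D h = D (z - y) - D (z - y - \<delta> *\<^sub>R h)"
    using linear_diff[OF assms(1), of "z - y" "z - y - \<delta> *\<^sub>R h"] linear_scale[OF assms(1), of \<delta> h] by simp
  then have "\<delta> * norm (D h) \<le> norm (D (z - y)) + norm (z - y - \<delta> *\<^sub>R h) * K"
    using norm_triangle_ineq4[of "D (z - y)" "D (z - y - \<delta> *\<^sub>R h)"] assms(2)[of "z - y - \<delta> *\<^sub>R h"] assms(3)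
    by (metis add_left_mono norm_scaleR abs_of_pos order_trans)
  then show ?thesis using assms(3) by (simp add: field_simps)
qed

lemma has_derivative_zero_along_level_chords:
  fixes f :: "'a::real_normed_vector \<Rightarrow> 'b::real_normed_vector"
  assumes f: "(f has_derivative D) (at x)" and "0 < \<delta>0"
    and chords: "\<And>\<delta>. 0 < \<delta> \<Longrightarrow> \<delta> \<le> \<delta>0 \<Longrightarrow> \<exists>y z. f y = f z \<and>
        norm (y - x) \<le> C * \<delta> \<and> norm (z - x) \<le> C * \<delta> \<and> norm (z - y - \<delta> *\<^sub>R h) \<le> C * \<delta>\<^sup>2"
  shows "D h = 0"
proof (rule ccontr)
  define \<epsilon> where "\<epsilon> = norm (D h)"
  assume "D h \<noteq> 0"
  then have \<epsilon>: "0 < \<epsilon>" by (simp add: \<epsilon>_def)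
  have "0 \<le> C * \<delta>0" using chords[OF \<open>0 < \<delta>0\<close> order_refl] by (meson norm_ge_zero order_trans)
  then have "0 \<le> C" using \<open>0 < \<delta>0\<close> by (simp add: zero_le_mult_iff)
  obtain K where K: "0 < K" "\<And>v. norm (D v) \<le> norm v * K"
    using has_derivative_bounded_linear[OF f] bounded_linear.pos_bounded by blast
  define e where "e = \<epsilon> / (4 * (C + 1))"
  have "0 < e" "e * C \<le> \<epsilon> / 4" using \<epsilon> \<open>0 \<le> C\<close> by (simp_all add: e_def field_simps)
  obtain d where d: "0 < d" "\<And>y z. norm (y - x) < d \<Longrightarrow> norm (z - x) < d \<Longrightarrow> f y = f z \<Longrightarrow>
      norm (D (z - y)) \<le> e * norm (y - x) + e * norm (z - x)"
    using has_derivative_level_chord[OF f \<open>0 < e\<close>] by blast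
  define \<delta> where "\<delta> = min \<delta>0 (min (d / (2 * (C + 1))) (\<epsilon> / (2 * K * (C + 1))))"
  have \<delta>: "0 < \<delta>" "\<delta> \<le> \<delta>0" "C * \<delta> < d" "C * K * \<delta> < \<epsilon> / 2"
  proof -
    show "0 < \<delta>" "\<delta> \<le> \<delta>0" using \<open>0 < \<delta>0\<close> d \<epsilon> K \<open>0 \<le> C\<close> by (simp_all add: \<delta>_def)
    have "\<delta> * (2 * (C + 1)) \<le> d" "\<delta> * (2 * K * (C + 1)) \<le> \<epsilon>"
      using \<open>0 \<le> C\<close> K(1) by (simp_all add: \<delta>_def min_le_iff_disj pos_le_divide_eq[symmetric])
    then show "C * \<delta> < d" "C * K * \<delta> < \<epsilon> / 2"
      using \<open>0 < \<delta>\<close> d(1) mult_pos_pos[OF K(1) \<open>0 < \<delta>\<close>] \<epsilon> by (simp_all add: algebra_simps)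
  qed
  obtain y z where yz: "f y = f z" "norm (y - x) \<le> C * \<delta>" "norm (z - x) \<le> C * \<delta>"
    "norm (z - y - \<delta> *\<^sub>R h) \<le> C * \<delta>\<^sup>2"
    using chords[OF \<delta>(1,2)] by blast
  have "norm (D (z - y)) \<le> e * (C * \<delta>) + e * (C * \<delta>)"
    using d(2)[of y z] yz \<delta>(3) mult_left_mono[OF yz(2), of e] mult_left_mono[OF yz(3), of e] \<open>0 < e\<close>
    by linarith
  also have "\<dots> \<le> \<epsilon> / 2 * \<delta>"
    using \<open>e * C \<le> \<epsilon> / 4\<close> \<delta>(1) mult_right_mono[of "e * C" "\<epsilon> / 4" \<delta>] by (simp add: algebra_simps)
  finally have chord: "norm (D (z - y)) / \<delta> \<le> \<epsilon> / 2" using \<delta>(1) by (simp add: divide_le_eq)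
  have "norm (z - y - \<delta> *\<^sub>R h) * K \<le> C * \<delta>\<^sup>2 * K"
    using mult_right_mono[OF yz(4), of K] K(1) by simp
  also have "\<dots> < \<epsilon> / 2 * \<delta>" using \<delta>(1,4) by (simp add: power2_eq_square algebra_simps)
  finally have error: "norm (z - y - \<delta> *\<^sub>R h) * K / \<delta> < \<epsilon> / 2"
    using \<delta>(1) by (simp add: divide_less_eq)
  show False
    using chord error norm_linear_le_chord[OF has_derivative_linear[OF f] K(2) \<delta>(1), of h z y] \<epsilon>_def
    by linarith
qed

lemma orthogonal_to_unit_eq:
  fixes T u :: complex
  assumes "norm T = 1" "Re (cnj T * u) = 0"
  shows "u = of_real (Im (cnj T * u)) * (\<i> * T)"
proof -
  have "u = (cnj T * u) * T"
    using assms(1) complex_norm_square[of T] by (simp add: mult.commute mult.left_commute)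
  also have "cnj T * u = \<i> * of_real (Im (cnj T * u))"
    using assms(2) by (simp add: complex_eq_iff)
  finally show ?thesis by (simp add: ac_simps)
qed

lemma closed_segment_coordinates:
  fixes a b w :: complex
  assumes "w \<in> closed_segment a b"
  obtains u where "0 \<le> u" "u \<le> 1" "Re w = (1 - u) * Re a + u * Re b" "Im w = (1 - u) * Im a + u * Im b"
proof -
  obtain u where "0 \<le> u" "u \<le> 1" "w = (1 - u) *\<^sub>R a + u *\<^sub>R b"
    using assms by (auto simp: in_segment)
  then show thesis using that[of u] by simp
qed

lemma closed_segment_vertical:
  fixes a b w :: complex
  assumes "w \<in> closed_segment a b" "Re a = Re b"
  shows "Re w = Re a"
proof -
  obtain u where "Re w = (1 - u) * Re a + u * Re b"
    using assms(1) by (rule closed_segment_coordinates)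
  then show ?thesis using assms(2) by (simp add: algebra_simps)
qed

lemma closed_segment_horizontal:
  fixes a b w :: complex
  assumes "w \<in> closed_segment a b" "Im a = Im b" "Re a \<noteq> Re b"
  shows "Im w = Im a" "Re w = Re a \<Longrightarrow> w = a" "Re w = Re b \<Longrightarrow> w = b"
proof -
  obtain u where u: "0 \<le> u" "u \<le> 1" "Re w = (1 - u) * Re a + u * Re b" "Im w = (1 - u) * Im a + u * Im b"
    using assms(1) by (rule closed_segment_coordinates)
  show "Im w = Im a" using u assms(2) by (simp add: algebra_simps)
  show "w = a" if "Re w = Re a"
  proof -
    have "u * (Re b - Re a) = 0" using that u(3) by (simp add: algebra_simps)
    then show ?thesis using assms(2,3) u by (simp add: complex_eq_iff)
  qed
  show "w = b" if "Re w = Re b"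
  proof -
    have "(1 - u) * (Re b - Re a) = 0" using that u(3) by (simp add: algebra_simps)
    then show ?thesis using assms(2,3) u by (simp add: complex_eq_iff)
  qed
qed

lemma smooth_on_closed_extension:
  assumes "smooth_on_closed S f"
  shows "\<exists>g. \<forall>z\<in>S. g z = f z \<and> g differentiable (at z)"
proof -
  obtain U g where U: "S \<subseteq> U" "smooth_on U g" "\<And>z. z \<in> S \<Longrightarrow> g z = f z"
    using assms unfolding smooth_on_closed_def by blast
  then have "g differentiable (at z)" if "z \<in> U" for z
    using that unfolding smooth_on_def differentiable_def by blast
  with U show ?thesis by blast
qed

lemma poly_mom_cong:
  "(\<And>k l. k + l \<le> N \<Longrightarrow> a k l x = b k l x) \<Longrightarrow> poly_mom a N x v = poly_mom b N x v"
  unfolding poly_mom_def by (intro sum.cong) auto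

lemma tendsto_poly_mom_momentum:
  "(f \<longlongrightarrow> v) F \<Longrightarrow> ((\<lambda>y. poly_mom a N x (f y)) \<longlongrightarrow> poly_mom a N x v) F"
  unfolding poly_mom_def case_prod_beta
  by (intro tendsto_sum tendsto_mult tendsto_const tendsto_power tendsto_Re tendsto_Im)

lemma poly_mom_differentiable:
  assumes "\<And>k l. k + l \<le> N \<Longrightarrow> a k l differentiable (at x)"
  shows "(\<lambda>p. poly_mom a N (fst p) (snd p)) differentiable (at (x, v))"
proof -
  have "finite {(k, l). k + l \<le> N}"
    by (rule finite_subset[of _ "{..N} \<times> {..N}"]) auto
  moreover have "(\<lambda>p. a k l (fst p)) differentiable (at (x, v))" if "k + l \<le> N" for k l
    using differentiable_chain_at[of fst "(x, v)" "a k l"] assms[OF that]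
      bounded_linear_imp_differentiable[OF bounded_linear_fst]
    by (simp add: o_def) blast
  moreover have "(\<lambda>p. Re (snd p)) differentiable (at (x, v))" "(\<lambda>p. Im (snd p)) differentiable (at (x, v))"
    by (intro bounded_linear_imp_differentiable bounded_linear_compose[OF _ bounded_linear_snd]
        bounded_linear_Re bounded_linear_Im)+
  ultimately show ?thesis
    unfolding poly_mom_def case_prod_beta
    by (intro differentiable_sum ballI differentiable_mult differentiable_power) auto
qed

section \<open>Unit-speed simple closed curves\<close>

locale unit_speed_loop =
  fixes \<gamma> :: "real \<Rightarrow> complex" and L :: real
  assumes L_pos: "0 < L" and smooth: "smooth_curve \<gamma>" and periodic: "\<And>t. \<gamma> (t + L) = \<gamma> t"
    and simple: "inj_on \<gamma> {0..<L}" and arclength: "\<And>t. norm (tangent \<gamma> t) = 1"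
begin

definition acceleration :: "real \<Rightarrow> complex" where
  "acceleration t = vector_derivative (tangent \<gamma>) (at t)"

lemma
  shows curve_has_derivative: "(\<gamma> has_vector_derivative tangent \<gamma> t) (at t)"
    and tangent_has_derivative: "(tangent \<gamma> has_vector_derivative acceleration t) (at t)"
    and continuous_on_curve: "continuous_on A \<gamma>"
    and continuous_on_tangent: "continuous_on A (tangent \<gamma>)"
    and continuous_on_acceleration: "continuous_on A acceleration"
proof -
  obtain D where D0: "D 0 = \<gamma>" and D: "\<And>k t. (D k has_vector_derivative D (Suc k) t) (at t)"
    using smooth unfolding smooth_curve_def by blast
  have D1: "tangent \<gamma> = D 1"
    by (rule ext) (metis D D0 One_nat_def tangent_def vector_derivative_at)
  have D2: "acceleration = D 2"
    by (rule ext) (metis D D1 acceleration_def numeral_2_eq_2 One_nat_def vector_derivative_at)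
  have "continuous_on A (D k)" for k
    by (metis D continuous_at_imp_continuous_on has_vector_derivative_continuous)
  then show "continuous_on A \<gamma>" "continuous_on A (tangent \<gamma>)" "continuous_on A acceleration"
    unfolding D1 D2 by (simp_all flip: D0)
  show "(\<gamma> has_vector_derivative tangent \<gamma> t) (at t)" using D[of 0] D0 D1 by simp
  show "(tangent \<gamma> has_vector_derivative acceleration t) (at t)"
    using D[of 1] D1 D2 by (simp add: numeral_2_eq_2)
qed

lemma norm_tangent [simp]: "norm (tangent \<gamma> t) = 1"
  by (rule arclength)

lemma norm_normal [simp]: "norm (normal \<gamma> t) = 1"
  by (simp add: normal_def norm_mult)

lemma cnj_tangent_mult_tangent [simp]: "cnj (tangent \<gamma> t) * tangent \<gamma> t = 1"
  using complex_norm_square[of "tangent \<gamma> t"] by (simp add: mult.commute)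

lemma tangent_orthogonal_acceleration: "Re (cnj (tangent \<gamma> t) * acceleration t) = 0"
proof -
  have "((\<lambda>s. tangent \<gamma> s \<bullet> tangent \<gamma> s) has_derivative
      (\<lambda>h. tangent \<gamma> t \<bullet> (h *\<^sub>R acceleration t) + (h *\<^sub>R acceleration t) \<bullet> tangent \<gamma> t)) (at t)"
    using tangent_has_derivative[of t] unfolding has_vector_derivative_def
    by (intro derivative_eq_intros) auto
  moreover have "(\<lambda>s. tangent \<gamma> s \<bullet> tangent \<gamma> s) = (\<lambda>s. 1)"
    by (simp flip: power2_norm_eq_inner)
  ultimately have "(\<lambda>h. tangent \<gamma> t \<bullet> (h *\<^sub>R acceleration t) + (h *\<^sub>R acceleration t) \<bullet> tangent \<gamma> t) = (\<lambda>h. 0)"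
    using has_derivative_unique has_derivative_const by metis
  from fun_cong[OF this, of 1] show ?thesis
    by (simp add: inner_complex_def algebra_simps)
qed

lemma curve_shift_period: "\<gamma> (s + of_int k * L) = \<gamma> s"
proof -
  have nat: "\<gamma> (s + real n * L) = \<gamma> s" for n s
    by (induction n arbitrary: s) (auto simp: distrib_right periodic add.assoc[symmetric])
  show ?thesis
  proof (cases "0 \<le> k")
    case True
    then show ?thesis using nat[of s "nat k"] by simp
  next
    case False
    then show ?thesis using nat[of "s + of_int k * L" "nat (- k)"] by simp
  qed
qed

lemma reduce_mod_period:
  obtains u k where "u \<in> {0..<L}" "s = u + of_int k * L"
proof -
  let ?k = "\<lfloor>s / L\<rfloor>"
  have "of_int ?k * L \<le> s / L * L" "s / L * L < (of_int ?k + 1) * L"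
    using L_pos by (intro mult_right_mono mult_strict_right_mono; linarith)+
  then have "of_int ?k * L \<le> s" "s < of_int ?k * L + L"
    using L_pos by (simp_all add: algebra_simps)
  then show thesis using that[of "s - of_int ?k * L" ?k] by simp
qed

lemma curve_eq_imp_period:
  assumes "\<gamma> s = \<gamma> s'"
  obtains k :: int where "s' = s + of_int k * L"
proof -
  obtain u k where u: "u \<in> {0..<L}" "s = u + of_int k * L" by (rule reduce_mod_period)
  obtain u' k' where u': "u' \<in> {0..<L}" "s' = u' + of_int k' * L" by (rule reduce_mod_period)
  have "\<gamma> u = \<gamma> u'" using assms u u' curve_shift_period by simp
  then have "u = u'" using simple u u' by (auto dest: inj_onD)
  with u u' that[of "k' - k"] show thesis by (simp add: algebra_simps)
qed

definition loop_from :: "real \<Rightarrow> real \<Rightarrow> complex" where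
  "loop_from c x = \<gamma> (c + L * x)"

lemma path_loop_from: "path (loop_from c)"
  unfolding loop_from_def path_def
  by (intro continuous_on_compose2[OF continuous_on_curve] continuous_intros) auto

lemma pathfinish_loop_from: "pathfinish (loop_from c) = pathstart (loop_from c)"
  by (simp add: loop_from_def pathfinish_def pathstart_def periodic)

lemma path_image_loop_from: "path_image (loop_from c) = range \<gamma>"
proof
  show "range \<gamma> \<subseteq> path_image (loop_from c)"
  proof
    fix z assume "z \<in> range \<gamma>"
    then obtain s where s: "z = \<gamma> s" by blast
    obtain u k where u: "u \<in> {0..<L}" "s - c = u + of_int k * L" by (rule reduce_mod_period)
    then have "z = loop_from c (u / L)"
      using s curve_shift_period[of "c + u" k] L_pos by (simp add: loop_from_def algebra_simps)
    moreover have "u / L \<in> {0..1}" using u L_pos by simp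
    ultimately show "z \<in> path_image (loop_from c)" unfolding path_image_def by blast
  qed
qed (auto simp: path_image_def loop_from_def)

lemma range_curve: "range \<gamma> = \<gamma> ` {0..L}"
proof -
  have "\<gamma> s \<in> \<gamma> ` {0..L}" for s
  proof -
    obtain u k where "u \<in> {0..<L}" "s = u + of_int k * L" by (rule reduce_mod_period)
    then show ?thesis using curve_shift_period[of u k] by auto
  qed
  then show ?thesis by auto
qed

lemma winding_number_loop_from:
  assumes "z \<notin> range \<gamma>"
  shows "winding_number (loop_from c) z = winding_number (loop_from 0) z"
proof -
  obtain u k where u: "u \<in> {0..<L}" "c = u + of_int k * L" by (rule reduce_mod_period)
  have a: "u / L \<in> {0..1}" using u L_pos by simp
  have "loop_from c x = shiftpath (u / L) (loop_from 0) x" if "x \<in> {0..1}" for x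
  proof -
    have "\<gamma> (c + L * x) = \<gamma> (u + L * x)"
      using curve_shift_period[of "u + L * x" k] u by (simp add: algebra_simps)
    moreover have "L * (u / L + x - 1) + of_int 1 * L = u + L * x" "L * (u / L + x) = u + L * x"
      using L_pos by (simp_all add: field_simps)
    then have "\<gamma> (L * (u / L + x - 1)) = \<gamma> (u + L * x)" "\<gamma> (L * (u / L + x)) = \<gamma> (u + L * x)"
      using curve_shift_period[of "L * (u / L + x - 1)" 1] by simp_all
    ultimately show ?thesis by (simp add: shiftpath_def loop_from_def)
  qed
  then have "winding_number (loop_from c) z = winding_number (shiftpath (u / L) (loop_from 0)) z"
    by (intro winding_number_cong) auto
  also have "\<dots> = winding_number (loop_from 0) z"
    using assms a by (intro winding_number_shiftpath path_loop_from pathfinish_loop_from)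
      (simp add: path_image_loop_from)
  finally show ?thesis .
qed

lemma simple_path_loop_from: "simple_path (loop_from c)"
  unfolding simple_path_def loop_free_def
proof (intro conjI path_loop_from ballI impI)
  fix x y :: real assume xy: "x \<in> {0..1}" "y \<in> {0..1}" "loop_from c x = loop_from c y"
  from xy(3) obtain k :: int where "c + L * y = c + L * x + of_int k * L"
    unfolding loop_from_def by (rule curve_eq_imp_period)
  then have "L * y = L * (x + of_int k)" by (simp add: algebra_simps)
  then have k: "y = x + of_int k" using L_pos by simp
  then have "k \<in> {-1, 0, 1}" using xy by auto
  then show "x = y \<or> x = 0 \<and> y = 1 \<or> x = 1 \<and> y = 0" using xy k by auto
qed

lemma loop_from_has_derivative: "(loop_from c has_vector_derivative L *\<^sub>R tangent \<gamma> (c + L * x)) (at x)"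
proof -
  have "((\<gamma> \<circ> (\<lambda>x. c + L * x)) has_vector_derivative L *\<^sub>R tangent \<gamma> (c + L * x)) (at x)"
    by (rule vector_diff_chain_at) (auto intro!: derivative_eq_intros curve_has_derivative)
  then show ?thesis by (simp add: o_def loop_from_def[abs_def])
qed

lemma valid_path_loop_from: "valid_path (loop_from c)"
proof -
  have "continuous_on {0..1} (\<lambda>x. L *\<^sub>R tangent \<gamma> (c + L * x))"
    by (intro continuous_intros continuous_on_compose2[OF continuous_on_tangent]) auto
  then have "loop_from c C1_differentiable_on {0..1}"
    unfolding C1_differentiable_on_def using loop_from_has_derivative by (intro exI conjI) auto
  then show ?thesis unfolding valid_path_def by (rule C1_differentiable_imp_piecewise)
qed

lemma path_image_subpath_loop_from:
  assumes "u \<le> v"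
  shows "path_image (subpath u v (loop_from c)) = \<gamma> ` {c + L * u..c + L * v}"
proof -
  have "(\<lambda>x. L * x + c) ` {u..v} = {c + L * u..c + L * v}"
    using image_affinity_atLeastAtMost[of L c u v] assms L_pos by (simp add: add.commute)
  moreover have "path_image (subpath u v (loop_from c)) = \<gamma> ` ((\<lambda>x. L * x + c) ` {u..v})"
    using assms by (simp add: path_image_subpath loop_from_def[abs_def] image_image add.commute)
  ultimately show ?thesis by simp
qed

lemma dist_sq_has_derivative:
  "((\<lambda>u. (c - \<gamma> u) \<bullet> (c - \<gamma> u)) has_real_derivative - 2 * ((c - \<gamma> s) \<bullet> tangent \<gamma> s)) (at s)"
proof -
  have "((\<lambda>u. (c - \<gamma> u) \<bullet> (c - \<gamma> u)) has_derivative
      (\<lambda>h. (c - \<gamma> s) \<bullet> (- (h *\<^sub>R tangent \<gamma> s)) + (- (h *\<^sub>R tangent \<gamma> s)) \<bullet> (c - \<gamma> s))) (at s)"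
    using curve_has_derivative[of s] unfolding has_vector_derivative_def
    by (intro derivative_eq_intros) auto
  moreover have "(\<lambda>h. (c - \<gamma> s) \<bullet> (- (h *\<^sub>R tangent \<gamma> s)) + (- (h *\<^sub>R tangent \<gamma> s)) \<bullet> (c - \<gamma> s)) =
      (*) (- 2 * ((c - \<gamma> s) \<bullet> tangent \<gamma> s))"
    by (auto simp: fun_eq_iff inner_commute algebra_simps)
  ultimately show ?thesis by (simp add: has_field_derivative_def)
qed

text \<open>A point of \<open>\<gamma>\<close> nearest to \<open>c\<close> is the foot of a normal through \<open>c\<close>.\<close>

lemma in_Omega_r_closedI:
  assumes "norm (c - \<gamma> s) \<le> r"
  shows "c \<in> Omega_r_closed \<gamma> r"
proof -
  let ?f = "\<lambda>u. (c - \<gamma> u) \<bullet> (c - \<gamma> u)"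
  have "continuous_on {0..L} ?f" by (intro continuous_intros continuous_on_curve)
  moreover have "{0..L} \<noteq> {}" using L_pos by simp
  ultimately obtain s0 where min: "\<forall>y\<in>{0..L}. ?f s0 \<le> ?f y"
    using continuous_attains_inf[OF compact_Icc] by blast
  have global_min: "?f s0 \<le> ?f y" for y
  proof -
    obtain u k where "u \<in> {0..<L}" "y = u + of_int k * L" by (rule reduce_mod_period)
    then show ?thesis using min curve_shift_period[of u k] by auto
  qed
  have "- 2 * ((c - \<gamma> s0) \<bullet> tangent \<gamma> s0) = 0"
    by (rule DERIV_local_min[OF dist_sq_has_derivative, of 1]) (use global_min in auto)
  then have "Re (cnj (tangent \<gamma> s0) * (c - \<gamma> s0)) = 0"
    by (simp add: inner_complex_def algebra_simps)
  then have "c - \<gamma> s0 = of_real (Im (cnj (tangent \<gamma> s0) * (c - \<gamma> s0))) * normal \<gamma> s0"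
    using orthogonal_to_unit_eq[OF norm_tangent] unfolding normal_def by blast
  then obtain b where b: "c - \<gamma> s0 = of_real b * normal \<gamma> s0" by blast
  have "\<bar>b\<bar> = norm (c - \<gamma> s0)" using b by (simp add: norm_mult)
  also have "\<dots> \<le> norm (c - \<gamma> s)"
    using global_min[of s] by (metis dot_square_norm norm_ge_zero power2_le_imp_le)
  finally have "\<bar>b\<bar> \<le> r" using assms by simp
  moreover have "c = offset \<gamma> b s0" using b by (simp add: offset_def algebra_simps)
  ultimately show ?thesis unfolding Omega_r_closed_def by auto
qed

lemma exists_closer_curve_point:
  assumes "norm (c - \<gamma> t) = r" and transversal: "(c - \<gamma> t) \<bullet> tangent \<gamma> t \<noteq> 0"
  obtains t' where "norm (c - \<gamma> t') < r"
proof -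
  let ?f = "\<lambda>u. (c - \<gamma> u) \<bullet> (c - \<gamma> u)"
  have "\<exists>t'. ?f t' < ?f t"
  proof (cases "0 < - 2 * ((c - \<gamma> t) \<bullet> tangent \<gamma> t)")
    case True
    from DERIV_pos_inc_left[OF dist_sq_has_derivative True] obtain d
      where "0 < d" "\<And>h. 0 < h \<Longrightarrow> h < d \<Longrightarrow> ?f (t - h) < ?f t" by blast
    then have "?f (t - d / 2) < ?f t" by simp
    then show ?thesis by blast
  next
    case False
    then have "- 2 * ((c - \<gamma> t) \<bullet> tangent \<gamma> t) < 0" using transversal by simp
    from DERIV_neg_dec_right[OF dist_sq_has_derivative this] obtain d
      where "0 < d" "\<And>h. 0 < h \<Longrightarrow> h < d \<Longrightarrow> ?f (t + h) < ?f t" by blast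
    then have "?f (t + d / 2) < ?f t" by simp
    then show ?thesis by blast
  qed
  then obtain t' where "?f t' < ?f t" by blast
  then have "norm (c - \<gamma> t') ^ 2 < norm (c - \<gamma> t) ^ 2" by (simp add: power2_norm_eq_inner)
  with assms(1) that show thesis by (meson norm_ge_zero power_less_imp_less_base)
qed

lemma norm_curve_diff_le: "0 \<le> \<delta> \<Longrightarrow> norm (\<gamma> (t + \<delta>) - \<gamma> t) \<le> \<delta>"
  using norm_diff_le_vector_derivative_bound[of t "t + \<delta>" \<gamma> "tangent \<gamma>" 1] curve_has_derivative
  by simp

lemma tangent_lipschitz_bound:
  obtains M where "0 \<le> M" "\<And>s. s \<in> {t..t + 1} \<Longrightarrow> norm (tangent \<gamma> s - tangent \<gamma> t) \<le> M * (s - t)"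
proof -
  have "bounded (acceleration ` {t..t + 1})"
    by (intro compact_imp_bounded compact_continuous_image continuous_on_acceleration compact_Icc)
  then obtain M where "0 < M" "\<forall>x \<in> acceleration ` {t..t + 1}. norm x \<le> M"
    unfolding bounded_pos by blast
  then show thesis
    using that[of M] norm_diff_le_vector_derivative_bound[of t _ "tangent \<gamma>" acceleration M]
      tangent_has_derivative by auto
qed

lemma curve_second_order_bound:
  obtains M where "0 \<le> M"
    "\<And>\<delta>. 0 \<le> \<delta> \<Longrightarrow> \<delta> \<le> 1 \<Longrightarrow> norm (\<gamma> (t + \<delta>) - \<gamma> t - \<delta> *\<^sub>R tangent \<gamma> t) \<le> M * \<delta>\<^sup>2"
    "\<And>\<delta>. 0 < \<delta> \<Longrightarrow> \<delta> \<le> 1 \<Longrightarrow> norm (sgn (\<gamma> (t + \<delta>) - \<gamma> t) - tangent \<gamma> t) \<le> 2 * M * \<delta>"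
proof -
  let ?T = "tangent \<gamma> t"
  obtain M where M: "0 \<le> M" "\<And>s. s \<in> {t..t + 1} \<Longrightarrow> norm (tangent \<gamma> s - ?T) \<le> M * (s - t)"
    using tangent_lipschitz_bound[of t] by blast
  have taylor: "norm (\<gamma> (t + \<delta>) - \<gamma> t - \<delta> *\<^sub>R ?T) \<le> M * \<delta>\<^sup>2" if "0 \<le> \<delta>" "\<delta> \<le> 1" for \<delta>
  proof -
    have "((\<lambda>s. s *\<^sub>R ?T) has_vector_derivative ?T) (at s)" for s
      unfolding has_vector_derivative_def
      by (rule bounded_linear_imp_has_derivative[OF bounded_linear_scaleR_left])
    then have "((\<lambda>s. \<gamma> s - s *\<^sub>R ?T) has_vector_derivative tangent \<gamma> s - ?T) (at s)" for s
      by (intro has_vector_derivative_diff curve_has_derivative)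
    moreover have "norm (tangent \<gamma> s - ?T) \<le> M * \<delta>" if "s \<in> {t..t + \<delta>}" for s
      using M(2)[of s] mult_left_mono[of "s - t" \<delta> M] M(1) that \<open>\<delta> \<le> 1\<close> by auto
    ultimately have "norm ((\<gamma> (t + \<delta>) - (t + \<delta>) *\<^sub>R ?T) - (\<gamma> t - t *\<^sub>R ?T)) \<le> M * \<delta> * (t + \<delta> - t)"
      using that by (intro norm_diff_le_vector_derivative_bound) auto
    then show ?thesis by (simp add: algebra_simps power2_eq_square)
  qed
  show thesis
  proof (rule that[OF M(1) taylor])
    fix \<delta> :: real assume \<delta>: "0 < \<delta>" "\<delta> \<le> 1"
    have "(\<gamma> (t + \<delta>) - \<gamma> t) /\<^sub>R \<delta> - ?T = (\<gamma> (t + \<delta>) - \<gamma> t - \<delta> *\<^sub>R ?T) /\<^sub>R \<delta>"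
      using \<delta>(1) by (simp add: scaleR_diff_right)
    then have "norm ((\<gamma> (t + \<delta>) - \<gamma> t) /\<^sub>R \<delta> - ?T) = norm (\<gamma> (t + \<delta>) - \<gamma> t - \<delta> *\<^sub>R ?T) / \<delta>"
      using \<delta>(1) by (simp add: divide_inverse_commute)
    also have "\<dots> \<le> M * \<delta>" using taylor[of \<delta>] \<delta> by (simp add: divide_le_eq power2_eq_square)
    finally show "norm (sgn (\<gamma> (t + \<delta>) - \<gamma> t) - ?T) \<le> 2 * M * \<delta>"
      using norm_sgn_diff_le[OF norm_tangent, of "(\<gamma> (t + \<delta>) - \<gamma> t) /\<^sub>R \<delta>" t] \<delta>(1)
      by (simp add: sgn_scaleR)
  qed
qed

lemma short_chord_bounds:
  assumes "0 < r"
  obtains M \<delta>0 where "0 \<le> M" "0 < \<delta>0"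
    "\<And>\<delta>. 0 < \<delta> \<Longrightarrow> \<delta> \<le> \<delta>0 \<Longrightarrow> \<gamma> (t + \<delta>) \<noteq> \<gamma> t \<and> \<delta> \<le> r \<and>
       norm (\<gamma> (t + \<delta>) - \<gamma> t - \<delta> *\<^sub>R tangent \<gamma> t) \<le> M * \<delta>\<^sup>2 \<and>
       norm (sgn (\<gamma> (t + \<delta>) - \<gamma> t) - tangent \<gamma> t) \<le> 2 * M * \<delta>"
proof -
  obtain M where M: "0 \<le> M"
    "\<And>\<delta>. 0 \<le> \<delta> \<Longrightarrow> \<delta> \<le> 1 \<Longrightarrow> norm (\<gamma> (t + \<delta>) - \<gamma> t - \<delta> *\<^sub>R tangent \<gamma> t) \<le> M * \<delta>\<^sup>2"
    "\<And>\<delta>. 0 < \<delta> \<Longrightarrow> \<delta> \<le> 1 \<Longrightarrow> norm (sgn (\<gamma> (t + \<delta>) - \<gamma> t) - tangent \<gamma> t) \<le> 2 * M * \<delta>"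
    using curve_second_order_bound[of t] by blast
  show thesis
  proof (rule that[OF M(1), of "min (min 1 r) (1 / (2 * M + 1))"])
    show "0 < min (min 1 r) (1 / (2 * M + 1))" using assms M(1) by simp
    fix \<delta> :: real assume \<delta>: "0 < \<delta>" "\<delta> \<le> min (min 1 r) (1 / (2 * M + 1))"
    then have "\<delta> \<le> 1" "\<delta> \<le> r" "\<delta> * (2 * M + 1) \<le> 1"
      using M(1) by (simp_all add: pos_le_divide_eq)
    have taylor: "norm (\<gamma> (t + \<delta>) - \<gamma> t - \<delta> *\<^sub>R tangent \<gamma> t) \<le> M * \<delta>\<^sup>2"
      using M(2) \<delta>(1) \<open>\<delta> \<le> 1\<close> by simp
    then have "\<delta> \<le> norm (\<gamma> (t + \<delta>) - \<gamma> t) + M * \<delta>\<^sup>2"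
      using norm_triangle_ineq2[of "\<delta> *\<^sub>R tangent \<gamma> t" "\<gamma> (t + \<delta>) - \<gamma> t"] \<delta>(1)
      by (simp add: norm_minus_commute)
    moreover have "M * \<delta>\<^sup>2 < \<delta>" using \<open>\<delta> * (2 * M + 1) \<le> 1\<close> \<delta>(1) M(1)
      by (simp add: power2_eq_square algebra_simps)
    moreover have "norm (\<gamma> (t + \<delta>) - \<gamma> t) \<le> \<delta>" using norm_curve_diff_le \<delta>(1) by simp
    ultimately show "\<gamma> (t + \<delta>) \<noteq> \<gamma> t \<and> \<delta> \<le> r \<and>
       norm (\<gamma> (t + \<delta>) - \<gamma> t - \<delta> *\<^sub>R tangent \<gamma> t) \<le> M * \<delta>\<^sup>2 \<and>
       norm (sgn (\<gamma> (t + \<delta>) - \<gamma> t) - tangent \<gamma> t) \<le> 2 * M * \<delta>"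
      using taylor M(3)[OF \<delta>(1) \<open>\<delta> \<le> 1\<close>] \<open>\<delta> \<le> r\<close> by auto
  qed
qed

lemma common_centre_unit_vectors:
  assumes "0 < r" "\<bar>\<sigma>\<bar> = 1"
  obtains C \<delta>0 where "0 < \<delta>0"
    "\<And>\<delta>. 0 < \<delta> \<Longrightarrow> \<delta> \<le> \<delta>0 \<Longrightarrow> \<exists>v1 v2. norm v1 = 1 \<and> norm v2 = 1 \<and>
        \<gamma> t + \<i> * of_real r * v1 = \<gamma> (t + \<delta>) + \<i> * of_real r * v2 \<and>
        norm (v1 - of_real \<sigma> * tangent \<gamma> t) \<le> C * \<delta> \<and> norm (v2 - of_real \<sigma> * tangent \<gamma> t) \<le> C * \<delta> \<and>
        norm (v2 - v1 - \<delta> *\<^sub>R (\<i> * tangent \<gamma> t / of_real r)) \<le> C * \<delta>\<^sup>2"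
proof -
  let ?T = "tangent \<gamma> t"
  obtain M \<delta>0 where M: "0 \<le> M" "0 < \<delta>0"
    and chord: "\<And>\<delta>. 0 < \<delta> \<Longrightarrow> \<delta> \<le> \<delta>0 \<Longrightarrow> \<gamma> (t + \<delta>) \<noteq> \<gamma> t \<and> \<delta> \<le> r \<and>
       norm (\<gamma> (t + \<delta>) - \<gamma> t - \<delta> *\<^sub>R ?T) \<le> M * \<delta>\<^sup>2 \<and> norm (sgn (\<gamma> (t + \<delta>) - \<gamma> t) - ?T) \<le> 2 * M * \<delta>"
    using short_chord_bounds[OF assms(1), of t] by blast
  show thesis
  proof (rule that[OF M(2), of "2 / r + 2 * M + M / r"])
    fix \<delta> :: real assume \<delta>: "0 < \<delta>" "\<delta> \<le> \<delta>0"
    define d where "d = \<gamma> (t + \<delta>) - \<gamma> t"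
    have d: "d \<noteq> 0" "norm d \<le> \<delta>" "\<delta> \<le> 2 * r" "norm (d - \<delta> *\<^sub>R ?T) \<le> M * \<delta>\<^sup>2"
      "norm (sgn d - ?T) \<le> 2 * M * \<delta>"
      using chord[OF \<delta>] norm_curve_diff_le[of \<delta> t] \<delta>(1) assms(1) by (simp_all add: d_def)
    obtain v1 v2 where v: "norm v1 = 1" "norm v2 = 1" "\<gamma> t + \<i> * of_real r * v1 = \<gamma> (t + \<delta>) + \<i> * of_real r * v2"
      "norm (v1 - of_real \<sigma> * ?T) \<le> 2 * \<delta> / r + norm (sgn d - ?T)"
      "norm (v2 - of_real \<sigma> * ?T) \<le> 2 * \<delta> / r + norm (sgn d - ?T)"
      "norm (v2 - v1 - \<delta> *\<^sub>R (\<i> * ?T / of_real r)) = norm (d - \<delta> *\<^sub>R ?T) / r"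
      using larmor_velocities_with_common_centre[OF assms d(1-3), of "\<gamma> t" ?T] by (auto simp: d_def)
    have "0 \<le> M * \<delta> / r" using assms(1) M(1) \<delta>(1) by simp
    then have "2 * \<delta> / r + norm (sgn d - ?T) \<le> (2 / r + 2 * M + M / r) * \<delta>"
      using d(5) by (simp add: algebra_simps)
    moreover have "norm (d - \<delta> *\<^sub>R ?T) / r \<le> (2 / r + 2 * M + M / r) * \<delta>\<^sup>2"
    proof -
      have "norm (d - \<delta> *\<^sub>R ?T) / r \<le> M * \<delta>\<^sup>2 / r" using d(4) assms(1) by (simp add: divide_right_mono)
      also have "\<dots> \<le> (2 / r + 2 * M + M / r) * \<delta>\<^sup>2" using assms(1) M(1) by (simp add: algebra_simps)
      finally show ?thesis .
    qed
    ultimately have "norm (v1 - of_real \<sigma> * ?T) \<le> (2 / r + 2 * M + M / r) * \<delta>"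
      "norm (v2 - of_real \<sigma> * ?T) \<le> (2 / r + 2 * M + M / r) * \<delta>"
      "norm (v2 - v1 - \<delta> *\<^sub>R (\<i> * ?T / of_real r)) \<le> (2 / r + 2 * M + M / r) * \<delta>\<^sup>2"
      using v(4-6) by linarith+
    with v(1-3) show "\<exists>v1 v2. norm v1 = 1 \<and> norm v2 = 1 \<and>
        \<gamma> t + \<i> * of_real r * v1 = \<gamma> (t + \<delta>) + \<i> * of_real r * v2 \<and>
        norm (v1 - of_real \<sigma> * ?T) \<le> (2 / r + 2 * M + M / r) * \<delta> \<and>
        norm (v2 - of_real \<sigma> * ?T) \<le> (2 / r + 2 * M + M / r) * \<delta> \<and>
        norm (v2 - v1 - \<delta> *\<^sub>R (\<i> * ?T / of_real r)) \<le> (2 / r + 2 * M + M / r) * \<delta>\<^sup>2"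
      by blast
  qed
qed

lemma tangent_locally_close:
  obtains \<eta> where "0 < \<eta>" "4 * \<eta> < L"
    "\<And>u. \<bar>u - t\<bar> \<le> \<eta> \<Longrightarrow>
       1/2 \<le> Re (cnj (tangent \<gamma> t) * tangent \<gamma> u) \<and> \<bar>Im (cnj (tangent \<gamma> t) * tangent \<gamma> u)\<bar> \<le> 1/2"
proof -
  have "isCont (tangent \<gamma>) t"
    using continuous_on_tangent[of UNIV] by (simp add: continuous_on_eq_continuous_at)
  then obtain d where d: "0 < d" "\<And>u. dist u t < d \<Longrightarrow> dist (tangent \<gamma> u) (tangent \<gamma> t) < 1/2"
    unfolding continuous_at_eps_delta by (meson half_gt_zero zero_less_one)
  show thesis
  proof (rule that[of "min (d / 2) (L / 8)"])
    show "0 < min (d / 2) (L / 8)" "4 * min (d / 2) (L / 8) < L" using d(1) L_pos by auto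
    fix u assume "\<bar>u - t\<bar> \<le> min (d / 2) (L / 8)"
    then have "norm (tangent \<gamma> u - tangent \<gamma> t) < 1/2" using d by (simp add: dist_norm)
    moreover have "cnj (tangent \<gamma> t) * tangent \<gamma> u - 1 = cnj (tangent \<gamma> t) * (tangent \<gamma> u - tangent \<gamma> t)"
      by (simp add: right_diff_distrib)
    ultimately have "norm (cnj (tangent \<gamma> t) * tangent \<gamma> u - 1) < 1/2" by (simp add: norm_mult)
    then show "1/2 \<le> Re (cnj (tangent \<gamma> t) * tangent \<gamma> u) \<and> \<bar>Im (cnj (tangent \<gamma> t) * tangent \<gamma> u)\<bar> \<le> 1/2"
      using abs_Re_le_cmod[of "cnj (tangent \<gamma> t) * tangent \<gamma> u - 1"]
        abs_Im_le_cmod[of "cnj (tangent \<gamma> t) * tangent \<gamma> u - 1"] by auto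
  qed
qed

end

section \<open>The normal points into the domain\<close>

locale jordan_domain = unit_speed_loop +
  fixes \<Omega> :: "complex set"
  assumes open_domain: "open \<Omega>" and frontier_domain: "frontier \<Omega> = range \<gamma>"
    and winding_number_domain: "\<And>z. z \<in> \<Omega> \<Longrightarrow> winding_number (loop_from 0) z = 1"
begin

lemma domain_disjoint_curve: "\<Omega> \<inter> range \<gamma> = {}"
  using frontier_domain open_domain by (metis frontier_def interior_open Diff_disjoint)

lemma domain_eq_inside: "\<Omega> = inside (range \<gamma>)"
proof -
  note jordan = Jordan_inside_outside[OF simple_path_loop_from pathfinish_loop_from, of 0,
      unfolded path_image_loop_from]
  have sub: "\<Omega> \<subseteq> inside (range \<gamma>)"
  proof
    fix z assume z: "z \<in> \<Omega>"
    then have "z \<notin> outside (range \<gamma>)"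
      using winding_number_domain[OF z] winding_number_zero_in_outside[OF path_loop_from pathfinish_loop_from]
      by (auto simp: path_image_loop_from)
    moreover have "z \<notin> range \<gamma>" using z domain_disjoint_curve by blast
    ultimately show "z \<in> inside (range \<gamma>)" using jordan by blast
  qed
  have "\<Omega> \<noteq> {}"
  proof
    assume "\<Omega> = {}"
    then show False using frontier_domain by simp
  qed
  moreover have "closure \<Omega> = \<Omega> \<union> range \<gamma>" by (simp add: closure_Un_frontier frontier_domain)
  then have "inside (range \<gamma>) \<subseteq> \<Omega> \<union> - closure \<Omega>"
    using inside_no_overlap[of "range \<gamma>"] by blast
  then have "\<Omega> \<inter> inside (range \<gamma>) = {} \<or> - closure \<Omega> \<inter> inside (range \<gamma>) = {}"
  proof (rule connectedD[rotated 4])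
    show "connected (inside (range \<gamma>))" using jordan by blast
    show "\<Omega> \<inter> - closure \<Omega> \<inter> inside (range \<gamma>) = {}" using closure_subset by blast
  qed (use open_domain in auto)
  ultimately show ?thesis using sub \<open>inside (range \<gamma>) \<subseteq> \<Omega> \<union> - closure \<Omega>\<close> by blast
qed

text \<open>Otherwise the boundary lies inside the circle, so the points of the circle, which are in \<open>\<Omega>\<close>,
would have winding number \<open>0\<close>.\<close>

lemma sphere_not_subset_domain:
  assumes "0 < r" "norm (c - \<gamma> s) \<le> r"
  shows "\<not> sphere c r \<subseteq> \<Omega>"
proof
  assume S: "sphere c r \<subseteq> \<Omega>"
  then have disj: "sphere c r \<inter> range \<gamma> = {}" using domain_disjoint_curve by blast
  then have "\<gamma> s \<in> ball c r" using assms(2) by (auto simp: dist_norm norm_minus_commute)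
  moreover have "ball c r \<inter> range \<gamma> = {} \<or> - cball c r \<inter> range \<gamma> = {}"
    using disj connected_path_image[OF path_loop_from, of 0]
    by (intro connectedD) (auto simp: path_image_loop_from)
  ultimately have outside_empty: "- cball c r \<inter> range \<gamma> = {}" by blast
  have "range \<gamma> \<subseteq> ball c r"
  proof
    fix x assume "x \<in> range \<gamma>"
    then have "dist c x \<le> r" "dist c x \<noteq> r" using outside_empty disj by auto
    then show "x \<in> ball c r" by simp
  qed
  have on_circle: "c + of_real r \<in> sphere c r" using assms(1) by (simp add: dist_norm)
  then have "winding_number (loop_from 0) (c + of_real r) = 0"
    using \<open>range \<gamma> \<subseteq> ball c r\<close>
    by (intro winding_number_zero_outside[OF path_loop_from convex_ball pathfinish_loop_from])
      (auto simp: path_image_loop_from)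
  moreover have "winding_number (loop_from 0) (c + of_real r) = 1"
    using on_circle S winding_number_domain by blast
  ultimately show False by simp
qed

end

locale boundary_chart = jordan_domain +
  fixes t \<eta> :: real
  assumes eta_pos: "0 < \<eta>" and eta_small: "4 * \<eta> < L"
    and tangent_close: "\<And>u. \<bar>u - t\<bar> \<le> \<eta> \<Longrightarrow>
       1/2 \<le> Re (cnj (tangent \<gamma> t) * tangent \<gamma> u) \<and> \<bar>Im (cnj (tangent \<gamma> t) * tangent \<gamma> u)\<bar> \<le> 1/2"
begin

definition chart :: "complex \<Rightarrow> complex" where
  "chart z = cnj (tangent \<gamma> t) * (z - \<gamma> t)"

definition unchart :: "complex \<Rightarrow> complex" where
  "unchart w = \<gamma> t + tangent \<gamma> t * w"

definition X :: "real \<Rightarrow> real" where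
  "X u = Re (chart (\<gamma> u))"

definition Y :: "real \<Rightarrow> real" where
  "Y u = Im (chart (\<gamma> u))"

lemma chart_unchart [simp]: "chart (unchart w) = w"
  by (simp add: chart_def unchart_def mult.assoc[symmetric])

lemma unchart_chart [simp]: "unchart (chart z) = z"
proof -
  have "tangent \<gamma> t * cnj (tangent \<gamma> t) = 1"
    using cnj_tangent_mult_tangent[of t] by (simp only: mult.commute)
  then show ?thesis by (simp add: chart_def unchart_def mult.assoc[symmetric])
qed

lemma chart_curve: "chart (\<gamma> u) = Complex (X u) (Y u)"
  by (simp add: X_def Y_def complex_eq_iff)

lemma chart_offset: "chart (offset \<gamma> s t) = \<i> * of_real s"
  by (simp add: chart_def offset_def normal_def mult.assoc[symmetric] mult.left_commute[of \<i>])

lemma chart_diff: "chart a - chart b = cnj (tangent \<gamma> t) * (a - b)"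
  by (simp add: chart_def algebra_simps)

lemma Im_mult_cnj_chart:
  "Im (a * cnj (c - d)) = Im ((cnj (tangent \<gamma> t) * a) * cnj (chart c - chart d))"
proof -
  have "(cnj (tangent \<gamma> t) * a) * cnj (cnj (tangent \<gamma> t) * (c - d)) =
      (cnj (tangent \<gamma> t) * tangent \<gamma> t) * (a * cnj (c - d))"
    by (simp add: ac_simps)
  also have "\<dots> = a * cnj (c - d)" by simp
  finally have "(cnj (tangent \<gamma> t) * a) * cnj (chart c - chart d) = a * cnj (c - d)"
    by (simp only: chart_diff)
  then show ?thesis by (simp only:)
qed

lemma chart_inj: "chart z = chart w \<Longrightarrow> z = w"
  by (metis unchart_chart)

lemma chart_in_closed_segment:
  assumes "w \<in> closed_segment a b"
  shows "chart w \<in> closed_segment (chart a) (chart b)"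
proof -
  obtain u where "0 \<le> u" "u \<le> 1" "w = (1 - u) *\<^sub>R a + u *\<^sub>R b" using assms by (auto simp: in_segment)
  moreover have "chart ((1 - u) *\<^sub>R a + u *\<^sub>R b) = (1 - u) *\<^sub>R chart a + u *\<^sub>R chart b"
    by (simp add: chart_def scaleR_conv_of_real algebra_simps)
  ultimately show ?thesis by (auto simp: in_segment)
qed

lemma X_Y_has_derivative:
  shows "(X has_real_derivative Re (cnj (tangent \<gamma> t) * tangent \<gamma> u)) (at u)"
    and "(Y has_real_derivative Im (cnj (tangent \<gamma> t) * tangent \<gamma> u)) (at u)"
proof -
  have "(chart \<circ> \<gamma> has_vector_derivative cnj (tangent \<gamma> t) * tangent \<gamma> u) (at u)"
    unfolding chart_def[abs_def] o_def
    by (auto intro!: derivative_eq_intros curve_has_derivative)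
  from bounded_linear.has_vector_derivative[OF bounded_linear_Re this]
    bounded_linear.has_vector_derivative[OF bounded_linear_Im this]
  show "(X has_real_derivative Re (cnj (tangent \<gamma> t) * tangent \<gamma> u)) (at u)"
    "(Y has_real_derivative Im (cnj (tangent \<gamma> t) * tangent \<gamma> u)) (at u)"
    unfolding X_def[abs_def] Y_def[abs_def] has_real_derivative_iff_has_vector_derivative
    by (simp_all add: o_def)
qed

lemma chart_increments:
  assumes "t - \<eta> \<le> u1" "u1 \<le> u2" "u2 \<le> t + \<eta>"
  shows "(u2 - u1) / 2 \<le> X u2 - X u1" "X u2 - X u1 \<le> u2 - u1" "\<bar>Y u2 - Y u1\<bar> \<le> (u2 - u1) / 2"
proof -
  let ?w = "\<lambda>u. cnj (tangent \<gamma> t) * tangent \<gamma> u"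
  have close: "1/2 \<le> Re (?w u)" "Re (?w u) \<le> 1" "\<bar>Im (?w u)\<bar> \<le> 1/2" if "u1 \<le> u" "u \<le> u2" for u
    using tangent_close[of u] that assms complex_Re_le_cmod[of "?w u"] by (auto simp: norm_mult)
  have "(u2 - u1) / 2 \<le> X u2 - X u1 \<and> X u2 - X u1 \<le> u2 - u1 \<and> \<bar>Y u2 - Y u1\<bar> \<le> (u2 - u1) / 2"
  proof (cases "u1 = u2")
    case False
    then have "u1 < u2" using assms by simp
    obtain z1 where z1: "u1 < z1" "z1 < u2" "X u2 - X u1 = (u2 - u1) * Re (?w z1)"
      using MVT2[OF \<open>u1 < u2\<close> X_Y_has_derivative(1)] by blast
    obtain z2 where z2: "u1 < z2" "z2 < u2" "Y u2 - Y u1 = (u2 - u1) * Im (?w z2)"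
      using MVT2[OF \<open>u1 < u2\<close> X_Y_has_derivative(2)] by blast
    show ?thesis
      using close[of z1] close[of z2] z1 z2 \<open>u1 < u2\<close>
        mult_left_mono[of "1/2" "Re (?w z1)" "u2 - u1"] mult_left_mono[of "Re (?w z1)" 1 "u2 - u1"]
        mult_left_mono[of "\<bar>Im (?w z2)\<bar>" "1/2" "u2 - u1"]
      by (auto simp: abs_mult)
  qed simp
  then show "(u2 - u1) / 2 \<le> X u2 - X u1" "X u2 - X u1 \<le> u2 - u1" "\<bar>Y u2 - Y u1\<bar> \<le> (u2 - u1) / 2"
    by auto
qed

lemma X_Y_at_t [simp]: "X t = 0" "Y t = 0"
  by (simp_all add: X_def Y_def chart_def)

lemma chart_bounds:
  assumes "\<bar>u - t\<bar> \<le> \<eta>"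
  shows "\<bar>X u\<bar> \<le> \<eta>" "\<bar>Y u\<bar> \<le> \<eta> / 2"
  using chart_increments[of t u] chart_increments[of u t] assms eta_pos by (cases "t \<le> u"; auto)+

lemma X_ends: "\<eta> / 2 \<le> X (t + \<eta>)" "X (t - \<eta>) \<le> - \<eta> / 2"
  using chart_increments[of t "t + \<eta>"] chart_increments[of "t - \<eta>" t] eta_pos by auto

lemma X_inj:
  assumes "\<bar>u1 - t\<bar> \<le> \<eta>" "\<bar>u2 - t\<bar> \<le> \<eta>" "X u1 = X u2"
  shows "u1 = u2"
  using chart_increments[of u1 u2] chart_increments[of u2 u1] assms
  by (cases u1 u2 rule: linorder_cases) (auto simp: abs_le_iff)

lemma two_eta_div_L: "0 < 2 * \<eta> / L" "2 * \<eta> / L < 1"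
  using eta_pos eta_small L_pos by simp_all

definition local_arc :: "real \<Rightarrow> complex" where
  "local_arc = subpath 0 (2 * \<eta> / L) (loop_from (t - \<eta>))"

definition rest_arc :: "real \<Rightarrow> complex" where
  "rest_arc = subpath (2 * \<eta> / L) 1 (loop_from (t - \<eta>))"

lemma local_arc_apply: "local_arc x = \<gamma> (t - \<eta> + 2 * \<eta> * x)"
  using L_pos by (simp add: local_arc_def subpath_def loop_from_def)

lemma path_image_local_arc: "path_image local_arc = \<gamma> ` {t - \<eta>..t + \<eta>}"
  using path_image_subpath_loop_from[of 0 "2 * \<eta> / L" "t - \<eta>"] two_eta_div_L L_pos
  by (simp add: local_arc_def add.commute)

lemma path_image_rest_arc: "path_image rest_arc = \<gamma> ` {t + \<eta>..t - \<eta> + L}"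
  using path_image_subpath_loop_from[of "2 * \<eta> / L" 1 "t - \<eta>"] two_eta_div_L L_pos
  by (simp add: rest_arc_def add.commute)

lemma local_arc_ends: "pathstart local_arc = \<gamma> (t - \<eta>)" "pathfinish local_arc = \<gamma> (t + \<eta>)"
  by (simp_all add: pathstart_def pathfinish_def local_arc_apply add.commute)

lemma rest_arc_ends: "pathstart rest_arc = \<gamma> (t + \<eta>)" "pathfinish rest_arc = \<gamma> (t - \<eta>)"
  using L_pos periodic[of "t - \<eta>"] by (simp_all add: rest_arc_def loop_from_def add.commute)

lemma arc_local_arc: "arc local_arc"
  unfolding local_arc_def using two_eta_div_L
  by (intro arc_simple_path_subpath_interior simple_path_loop_from) auto

lemma path_rest_arc: "path rest_arc"
  unfolding rest_arc_def using two_eta_div_L by (intro path_subpath path_loop_from) auto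

lemma valid_path_local_arc: "valid_path local_arc"
  unfolding local_arc_def using two_eta_div_L by (intro valid_path_subpath valid_path_loop_from) auto

lemma local_arc_has_derivative:
  "(local_arc has_vector_derivative (2 * \<eta>) *\<^sub>R tangent \<gamma> (t - \<eta> + 2 * \<eta> * x)) (at x)"
proof -
  have "((\<gamma> \<circ> (\<lambda>x. t - \<eta> + 2 * \<eta> * x)) has_vector_derivative (2 * \<eta>) *\<^sub>R tangent \<gamma> (t - \<eta> + 2 * \<eta> * x)) (at x)"
    by (rule vector_diff_chain_at) (auto intro!: derivative_eq_intros curve_has_derivative)
  then show ?thesis by (simp add: o_def local_arc_apply[abs_def])
qed

lemma range_curve_split: "range \<gamma> = path_image local_arc \<union> path_image rest_arc"
proof -
  have "{t - \<eta>..t + \<eta>} \<union> {t + \<eta>..t - \<eta> + L} = {t - \<eta>..t - \<eta> + L}"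
    using eta_pos eta_small by auto
  then have "path_image local_arc \<union> path_image rest_arc = \<gamma> ` {t - \<eta>..t - \<eta> + L}"
    by (simp add: path_image_local_arc path_image_rest_arc flip: image_Un)
  also have "\<dots> = range \<gamma>"
    using path_image_subpath_loop_from[of 0 1 "t - \<eta>"] path_image_loop_from[of "t - \<eta>"] by simp
  finally show ?thesis by simp
qed

lemma curve_point_not_on_rest_arc: "\<gamma> t \<notin> path_image rest_arc"
proof
  assume "\<gamma> t \<in> path_image rest_arc"
  then obtain u where u: "u \<in> {t + \<eta>..t - \<eta> + L}" "\<gamma> t = \<gamma> u" by (auto simp: path_image_rest_arc)
  then obtain k :: int where k: "u = t + of_int k * L" by (elim curve_eq_imp_period)
  have "\<eta> \<le> of_int k * L" "of_int k * L \<le> L - \<eta>" using u(1) k by auto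
  then have "0 * L < of_int k * L" "of_int k * L < 1 * L" using eta_pos by linarith+
  then have "(0::real) < of_int k" "of_int k < (1::real)"
    using L_pos by (meson mult_less_cancel_right_pos)+
  then show False by simp
qed

definition corner_right :: complex where
  "corner_right = unchart (Complex (X (t + \<eta>)) (- 4 * \<eta>))"

definition corner_left :: complex where
  "corner_left = unchart (Complex (X (t - \<eta>)) (- 4 * \<eta>))"

definition detour :: "real \<Rightarrow> complex" where
  "detour = linepath (\<gamma> (t + \<eta>)) corner_right +++
     (linepath corner_right corner_left +++ linepath corner_left (\<gamma> (t - \<eta>)))"

definition comparison_loop :: "real \<Rightarrow> complex" where
  "comparison_loop = local_arc +++ detour"

lemma detour_ends: "pathstart detour = \<gamma> (t + \<eta>)" "pathfinish detour = \<gamma> (t - \<eta>)"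
  by (simp_all add: detour_def)

lemma path_image_detour:
  "path_image detour = closed_segment (\<gamma> (t + \<eta>)) corner_right \<union> closed_segment corner_right corner_left \<union>
     closed_segment corner_left (\<gamma> (t - \<eta>))"
  by (auto simp: detour_def path_image_join)

lemma corner_charts: "chart corner_right = Complex (X (t + \<eta>)) (- 4 * \<eta>)"
  "chart corner_left = Complex (X (t - \<eta>)) (- 4 * \<eta>)"
  by (simp_all add: corner_right_def corner_left_def)

lemma X_ends_ne: "X (t + \<eta>) \<noteq> X (t - \<eta>)"
  using X_ends eta_pos by linarith

lemma chart_right_leg:
  assumes "w \<in> closed_segment (\<gamma> (t + \<eta>)) corner_right"
  shows "Re (chart w) = X (t + \<eta>)"
  using closed_segment_vertical(1)[OF chart_in_closed_segment[OF assms]]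
  by (simp add: chart_curve corner_charts)

lemma chart_left_leg:
  assumes "w \<in> closed_segment corner_left (\<gamma> (t - \<eta>))"
  shows "Re (chart w) = X (t - \<eta>)"
  using closed_segment_vertical(1)[OF chart_in_closed_segment[OF assms]]
  by (simp add: chart_curve corner_charts)

lemma chart_bottom:
  assumes "w \<in> closed_segment corner_right corner_left"
  shows "Im (chart w) = - 4 * \<eta>"
    "Re (chart w) = X (t + \<eta>) \<Longrightarrow> w = corner_right" "Re (chart w) = X (t - \<eta>) \<Longrightarrow> w = corner_left"
  using closed_segment_horizontal[OF chart_in_closed_segment[OF assms]] X_ends_ne
  by (auto simp: corner_charts intro: chart_inj)

lemma chart_detour:
  assumes "w \<in> path_image detour"
  shows "Re (chart w) = X (t + \<eta>) \<or> Re (chart w) = X (t - \<eta>) \<or> Im (chart w) = - 4 * \<eta>"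
  using assms chart_right_leg chart_left_leg chart_bottom(1) unfolding path_image_detour by blast

lemma arc_detour: "arc detour"
proof -
  have "Im (chart (\<gamma> (t + \<eta>))) \<noteq> Im (chart corner_right)" "Re (chart corner_right) \<noteq> Re (chart corner_left)"
    "Im (chart corner_left) \<noteq> Im (chart (\<gamma> (t - \<eta>)))"
    using X_ends_ne chart_bounds[of "t + \<eta>"] chart_bounds[of "t - \<eta>"] eta_pos
    by (auto simp: chart_curve corner_charts)
  then have ne: "\<gamma> (t + \<eta>) \<noteq> corner_right" "corner_right \<noteq> corner_left" "corner_left \<noteq> \<gamma> (t - \<eta>)"
    by metis+
  have "arc (linepath corner_right corner_left +++ linepath corner_left (\<gamma> (t - \<eta>)))"
  proof (rule arc_join)
    show "path_image (linepath corner_right corner_left) \<inter> path_image (linepath corner_left (\<gamma> (t - \<eta>)))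
        \<subseteq> {pathstart (linepath corner_left (\<gamma> (t - \<eta>)))}"
      using chart_bottom(3) chart_left_leg by auto
  qed (use ne in auto)
  moreover have "path_image (linepath (\<gamma> (t + \<eta>)) corner_right) \<inter>
      path_image (linepath corner_right corner_left +++ linepath corner_left (\<gamma> (t - \<eta>)))
      \<subseteq> {pathstart (linepath corner_right corner_left +++ linepath corner_left (\<gamma> (t - \<eta>)))}"
  proof
    fix w assume w: "w \<in> path_image (linepath (\<gamma> (t + \<eta>)) corner_right) \<inter>
      path_image (linepath corner_right corner_left +++ linepath corner_left (\<gamma> (t - \<eta>)))"
    then have "Re (chart w) = X (t + \<eta>)" using chart_right_leg by auto
    moreover have "w \<in> closed_segment corner_right corner_left \<or> w \<in> closed_segment corner_left (\<gamma> (t - \<eta>))"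
      using w by (simp add: path_image_join)
    ultimately show "w \<in> {pathstart (linepath corner_right corner_left +++ linepath corner_left (\<gamma> (t - \<eta>)))}"
      using chart_bottom(2) chart_left_leg X_ends_ne by auto
  qed
  ultimately show ?thesis unfolding detour_def using ne by (auto intro!: arc_join[of "linepath _ _"])
qed

lemma local_arc_meets_detour:
  "path_image local_arc \<inter> path_image detour \<subseteq> {\<gamma> (t - \<eta>), \<gamma> (t + \<eta>)}"
proof
  fix w assume w: "w \<in> path_image local_arc \<inter> path_image detour"
  then obtain u where "u \<in> {t - \<eta>..t + \<eta>}" "w = \<gamma> u" by (auto simp: path_image_local_arc)
  then have u: "\<bar>u - t\<bar> \<le> \<eta>" "w = \<gamma> u" by auto
  then have "Y u \<noteq> - 4 * \<eta>" using chart_bounds(2)[of u] eta_pos by auto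
  then have "X u = X (t + \<eta>) \<or> X u = X (t - \<eta>)"
    using chart_detour[of w] w u by (simp add: chart_curve)
  then have "u = t + \<eta> \<or> u = t - \<eta>" using X_inj u(1) eta_pos by auto
  then show "w \<in> {\<gamma> (t - \<eta>), \<gamma> (t + \<eta>)}" using u by auto
qed

lemma simple_path_comparison_loop: "simple_path comparison_loop"
  and comparison_loop_closed: "pathfinish comparison_loop = pathstart comparison_loop"
  unfolding comparison_loop_def
  using arc_local_arc arc_detour local_arc_meets_detour
  by (auto intro!: simple_path_join_loop simp: local_arc_ends detour_ends)

lemma offset_not_on_comparison_loop:
  assumes "s \<noteq> 0" "s \<noteq> - 4 * \<eta>"
  shows "offset \<gamma> s t \<notin> path_image comparison_loop"
proof
  assume on: "offset \<gamma> s t \<in> path_image comparison_loop"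
  have chart: "Re (chart (offset \<gamma> s t)) = 0" "Im (chart (offset \<gamma> s t)) = s"
    by (simp_all add: chart_offset)
  show False
  proof (cases "offset \<gamma> s t \<in> path_image local_arc")
    case True
    then obtain u where "u \<in> {t - \<eta>..t + \<eta>}" "offset \<gamma> s t = \<gamma> u"
      by (auto simp: path_image_local_arc)
    then have u: "\<bar>u - t\<bar> \<le> \<eta>" "offset \<gamma> s t = \<gamma> u" by auto
    then have "X u = X t" "Y u = s" using chart by (simp_all add: chart_curve)
    then show False using X_inj[of u t] u(1) eta_pos assms(1) by auto
  next
    case False
    then have "offset \<gamma> s t \<in> path_image detour"
      using on by (simp add: comparison_loop_def path_image_join local_arc_ends detour_ends)
    then show False using chart_detour[of "offset \<gamma> s t"] chart X_ends eta_pos assms(2) by auto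
  qed
qed

lemma winding_number_local_arc_neg: "Re (winding_number local_arc (offset \<gamma> (- 2 * \<eta>) t)) < 0"
proof (rule winding_number_neg_lt[OF valid_path_local_arc _ _ local_arc_has_derivative])
  show "offset \<gamma> (- 2 * \<eta>) t \<notin> path_image local_arc"
    using offset_not_on_comparison_loop[of "- 2 * \<eta>"] eta_pos
    by (auto simp: comparison_loop_def path_image_join local_arc_ends detour_ends)
  show "0 < \<eta> * \<eta> / 2" using eta_pos by simp
  fix x :: real assume x: "0 < x" "x < 1"
  define u where "u = t - \<eta> + 2 * \<eta> * x"
  have "\<eta> * x \<le> \<eta>" using x eta_pos by (simp add: mult_left_le)
  then have u: "\<bar>u - t\<bar> \<le> \<eta>" using x eta_pos by (simp add: u_def abs_le_iff)
  define w where "w = cnj (tangent \<gamma> t) * tangent \<gamma> u"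
  have "Im (((2 * \<eta>) *\<^sub>R tangent \<gamma> u) * cnj (local_arc x - offset \<gamma> (- 2 * \<eta>) t)) =
      2 * \<eta> * (Im w * X u - Re w * (Y u + 2 * \<eta>))"
    by (subst Im_mult_cnj_chart)
      (simp add: local_arc_apply chart_curve chart_offset w_def u_def scaleR_conv_of_real algebra_simps)
  also have "\<dots> \<le> 2 * \<eta> * (\<eta> / 2 - 3 * \<eta> / 4)"
  proof -
    have "Im w * X u \<le> 1/2 * \<eta>"
      using tangent_close[OF u] chart_bounds(1)[OF u] abs_mult[of "Im w" "X u"]
        mult_mono[of "\<bar>Im w\<bar>" "1/2" "\<bar>X u\<bar>" \<eta>] abs_ge_self[of "Im w * X u"]
      by (simp add: w_def)
    moreover have "1/2 * (3 * \<eta> / 2) \<le> Re w * (Y u + 2 * \<eta>)"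
      using tangent_close[OF u] chart_bounds(2)[OF u] eta_pos by (intro mult_mono) (auto simp: w_def)
    ultimately show ?thesis using eta_pos by (intro mult_left_mono) auto
  qed
  finally show "Im (((2 * \<eta>) *\<^sub>R tangent \<gamma> (t - \<eta> + 2 * \<eta> * x)) *
      cnj (local_arc x - offset \<gamma> (- 2 * \<eta>) t)) \<le> - (\<eta> * \<eta> / 2)"
    by (simp add: u_def algebra_simps)
qed

lemma winding_number_segment_neg:
  assumes "0 < Im ((chart a - chart b) * cnj (chart a - chart z))"
  shows "Re (winding_number (linepath a b) z) < 0"
  using assms by (intro winding_number_linepath_neg_lt) (subst Im_mult_cnj_chart, simp add: chart_diff)

lemma winding_number_detour_neg: "Re (winding_number detour (offset \<gamma> (- 2 * \<eta>) t)) < 0"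
proof -
  let ?z = "offset \<gamma> (- 2 * \<eta>) t"
  have Xq: "\<eta> / 2 \<le> X (t + \<eta>)" and Xp: "X (t - \<eta>) \<le> - \<eta> / 2"
    and Yq: "- \<eta> / 2 \<le> Y (t + \<eta>)" and Yp: "- \<eta> / 2 \<le> Y (t - \<eta>)"
    using X_ends chart_bounds(2)[of "t + \<eta>"] chart_bounds(2)[of "t - \<eta>"] eta_pos by auto
  have "?z \<notin> path_image detour"
    using chart_detour[of ?z] X_ends eta_pos by (auto simp: chart_offset)
  then have notin: "?z \<notin> closed_segment (\<gamma> (t + \<eta>)) corner_right" "?z \<notin> closed_segment corner_right corner_left"
    "?z \<notin> closed_segment corner_left (\<gamma> (t - \<eta>))"
    by (simp_all add: path_image_detour)
  have "Re (winding_number (linepath (\<gamma> (t + \<eta>)) corner_right) ?z) < 0"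
    using Xq Yq eta_pos
    by (intro winding_number_segment_neg) (simp add: chart_curve corner_charts chart_offset)
  moreover have "Re (winding_number (linepath corner_right corner_left) ?z) < 0"
    using Xq Xp eta_pos
    by (intro winding_number_segment_neg) (simp add: corner_charts chart_offset)
  moreover have "Re (winding_number (linepath corner_left (\<gamma> (t - \<eta>))) ?z) < 0"
    using Xp Yp eta_pos
    by (intro winding_number_segment_neg) (simp add: chart_curve corner_charts chart_offset mult_neg_neg)
  moreover have "winding_number detour ?z = winding_number (linepath (\<gamma> (t + \<eta>)) corner_right) ?z +
      (winding_number (linepath corner_right corner_left) ?z +
       winding_number (linepath corner_left (\<gamma> (t - \<eta>))) ?z)"
    unfolding detour_def using notin by (simp add: winding_number_join path_image_join)
  ultimately show ?thesis by simp
qed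

lemma winding_number_comparison_loop_below: "winding_number comparison_loop (offset \<gamma> (- 2 * \<eta>) t) = -1"
proof (rule simple_closed_path_winding_number_neg[OF simple_path_comparison_loop comparison_loop_closed])
  show notin: "offset \<gamma> (- 2 * \<eta>) t \<notin> path_image comparison_loop"
    using eta_pos by (intro offset_not_on_comparison_loop) auto
  then have "winding_number comparison_loop (offset \<gamma> (- 2 * \<eta>) t) =
      winding_number local_arc (offset \<gamma> (- 2 * \<eta>) t) + winding_number detour (offset \<gamma> (- 2 * \<eta>) t)"
    unfolding comparison_loop_def using arc_local_arc arc_detour
    by (intro winding_number_join) (auto simp: path_image_join local_arc_ends detour_ends arc_imp_path)
  then show "Re (winding_number comparison_loop (offset \<gamma> (- 2 * \<eta>) t)) < 0"
    using winding_number_local_arc_neg winding_number_detour_neg by simp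
qed

lemma Re_winding_number_comparison_loop_le:
  assumes "y \<notin> path_image comparison_loop"
  shows "Re (winding_number comparison_loop y) \<le> 0"
proof (cases "y \<in> inside (path_image comparison_loop)")
  case True
  have path: "path comparison_loop" using simple_path_comparison_loop by (rule simple_path_imp_path)
  have below_inside: "offset \<gamma> (- 2 * \<eta>) t \<in> inside (path_image comparison_loop)"
    using winding_number_comparison_loop_below winding_number_zero_in_outside[OF path comparison_loop_closed]
      offset_not_on_comparison_loop[of "- 2 * \<eta>"] eta_pos inside_Un_outside
    by fastforce
  have "winding_number comparison_loop y = -1"
    by (rule simple_closed_path_winding_number_inside[OF simple_path_comparison_loop])
      (use True below_inside winding_number_comparison_loop_below in auto)
  then show ?thesis by simp
next
  case False
  then have "y \<in> outside (path_image comparison_loop)" using assms inside_Un_outside by blast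
  then show ?thesis
    using winding_number_zero_in_outside simple_path_comparison_loop comparison_loop_closed
    by (simp add: simple_path_imp_path)
qed

lemma offset_outside_comparison_loop:
  assumes "0 < e"
  shows "offset \<gamma> e t \<in> outside (path_image comparison_loop)"
proof -
  let ?ray = "(\<lambda>s. offset \<gamma> s t) ` {e..}"
  have not_on: "offset \<gamma> s t \<notin> path_image comparison_loop" if "e \<le> s" for s
    using that assms eta_pos by (intro offset_not_on_comparison_loop) auto
  then have "?ray \<subseteq> - path_image comparison_loop" by blast
  moreover have "connected ?ray"
    unfolding offset_def by (intro connected_continuous_image continuous_intros) auto
  ultimately have "?ray \<subseteq> connected_component_set (- path_image comparison_loop) (offset \<gamma> e t)"
    by (intro connected_component_maximal) auto
  moreover have "\<not> bounded ?ray"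
  proof
    assume "bounded ?ray"
    then obtain B where B: "\<And>s. e \<le> s \<Longrightarrow> norm (offset \<gamma> s t) \<le> B" by (auto simp: bounded_iff)
    define s where "s = \<bar>B\<bar> + norm (\<gamma> t) + e + 1"
    have "0 < s" unfolding s_def using assms norm_ge_zero[of "\<gamma> t"] abs_ge_zero[of B] by linarith
    then have "s = norm (offset \<gamma> s t - \<gamma> t)" by (simp add: offset_def norm_mult)
    also have "\<dots> \<le> norm (offset \<gamma> s t) + norm (\<gamma> t)" by (rule norm_triangle_ineq4)
    also have "\<dots> \<le> B + norm (\<gamma> t)" using B[of s] assms by (simp add: s_def)
    finally show False using abs_ge_self[of B] assms by (simp add: s_def)
  qed
  ultimately have "\<not> bounded (connected_component_set (- path_image comparison_loop) (offset \<gamma> e t))"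
    using bounded_subset by blast
  then show ?thesis unfolding outside_def using not_on[of e] by simp
qed

definition complementary_loop :: "real \<Rightarrow> complex" where
  "complementary_loop = reversepath detour +++ rest_arc"

lemma path_image_comparison_loop:
  "path_image comparison_loop = path_image local_arc \<union> path_image detour"
  by (simp add: comparison_loop_def path_image_join local_arc_ends detour_ends)

lemma path_image_complementary_loop:
  "path_image complementary_loop = path_image detour \<union> path_image rest_arc"
  by (simp add: complementary_loop_def path_image_join detour_ends rest_arc_ends)

lemma complementary_loop_closed_path:
  "path complementary_loop" "pathfinish complementary_loop = pathstart complementary_loop"
  using arc_detour path_rest_arc
  by (simp_all add: complementary_loop_def detour_ends rest_arc_ends arc_imp_path)

lemma curve_point_not_on_complementary_loop: "\<gamma> t \<notin> path_image complementary_loop"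
  using chart_detour[of "\<gamma> t"] X_ends eta_pos curve_point_not_on_rest_arc
  by (auto simp: path_image_complementary_loop chart_curve)

lemma winding_number_loop_split:
  assumes "y \<notin> range \<gamma>" "y \<notin> path_image detour"
  shows "winding_number (loop_from 0) y = winding_number comparison_loop y + winding_number complementary_loop y"
proof -
  have y: "y \<notin> path_image local_arc" "y \<notin> path_image rest_arc" "y \<notin> path_image (loop_from (t - \<eta>))"
    using assms(1) range_curve_split by (auto simp: path_image_loop_from)
  have paths: "path local_arc" "path detour" "path (reversepath detour)"
    using arc_local_arc arc_detour by (simp_all add: arc_imp_path)
  have "winding_number (loop_from 0) y = winding_number (loop_from (t - \<eta>)) y"
    by (rule winding_number_loop_from[OF assms(1), symmetric])
  also have "\<dots> = winding_number local_arc y + winding_number rest_arc y"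
    using winding_number_subpath_combine[OF path_loop_from y(3), of 0 "2 * \<eta> / L" 1] two_eta_div_L
    by (simp add: local_arc_def rest_arc_def)
  also have "winding_number local_arc y = winding_number comparison_loop y - winding_number detour y"
    using winding_number_join[OF paths(1) y(1) paths(2) assms(2)]
    by (simp add: comparison_loop_def local_arc_ends detour_ends)
  also have "winding_number rest_arc y = winding_number complementary_loop y + winding_number detour y"
    using winding_number_join[OF paths(3) _ path_rest_arc y(2)] winding_number_reversepath[OF paths(2) assms(2)]
      assms(2)
    by (simp add: complementary_loop_def detour_ends rest_arc_ends)
  finally show ?thesis by simp
qed

lemma winding_number_near_curve_point:
  obtains d k where "0 < d"
    "\<And>y. y \<in> ball (\<gamma> t) d \<Longrightarrow> y \<notin> range \<gamma> \<longleftrightarrow> y \<notin> path_image comparison_loop"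
    "\<And>y. y \<in> ball (\<gamma> t) d \<Longrightarrow> y \<notin> range \<gamma> \<Longrightarrow>
       winding_number (loop_from 0) y = winding_number comparison_loop y + k"
proof -
  obtain d where d: "0 < d" "ball (\<gamma> t) d \<inter> path_image complementary_loop = {}"
    using not_on_path_ball[OF complementary_loop_closed_path(1) curve_point_not_on_complementary_loop]
    by blast
  have "winding_number complementary_loop constant_on ball (\<gamma> t) d"
    using d(2) by (intro winding_number_constant complementary_loop_closed_path) auto
  then obtain k where k: "\<And>y. y \<in> ball (\<gamma> t) d \<Longrightarrow> winding_number complementary_loop y = k"
    unfolding constant_on_def by blast
  have "y \<notin> path_image detour" "y \<notin> path_image rest_arc" if "y \<in> ball (\<gamma> t) d" for y
    using that d(2) by (auto simp: path_image_complementary_loop)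
  then show thesis
    using that[OF d(1)] winding_number_loop_split k range_curve_split
    by (auto simp: path_image_comparison_loop)
qed

text \<open>The ray above \<open>\<gamma> t\<close> lies outside the comparison loop, while points of \<open>\<Omega>\<close> near \<open>\<gamma> t\<close>
have boundary winding number \<open>1\<close>; so the constant \<open>k\<close> is not \<open>0\<close>.\<close>

lemma eventually_offset_in_domain: "\<forall>\<^sub>F e in at_right 0. offset \<gamma> e t \<in> \<Omega>"
proof -
  obtain d k where d: "0 < d"
    and not_on: "\<And>y. y \<in> ball (\<gamma> t) d \<Longrightarrow> y \<notin> range \<gamma> \<longleftrightarrow> y \<notin> path_image comparison_loop"
    and split: "\<And>y. y \<in> ball (\<gamma> t) d \<Longrightarrow> y \<notin> range \<gamma> \<Longrightarrow>
       winding_number (loop_from 0) y = winding_number comparison_loop y + k"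
    using winding_number_near_curve_point by blast
  have "\<gamma> t \<in> closure \<Omega>" using frontier_domain by (auto simp: frontier_def)
  then obtain y where y: "y \<in> \<Omega>" "dist y (\<gamma> t) < d" using d closure_approachable by metis
  then have "y \<in> ball (\<gamma> t) d" "y \<notin> range \<gamma>" using domain_disjoint_curve by (auto simp: dist_commute)
  then have "1 = Re (winding_number comparison_loop y) + Re k"
    using split winding_number_domain[OF y(1)] by (metis one_complex.sel(1) plus_complex.sel(1))
  moreover have "Re (winding_number comparison_loop y) \<le> 0"
    using Re_winding_number_comparison_loop_le not_on \<open>y \<in> ball (\<gamma> t) d\<close> \<open>y \<notin> range \<gamma>\<close> by blast
  ultimately have "k \<noteq> 0" by auto
  show ?thesis unfolding eventually_at_right_field
  proof (intro exI[of _ d] conjI allI impI d)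
    fix e :: real assume e: "0 < e" "e < d"
    let ?z = "offset \<gamma> e t"
    have "?z \<in> ball (\<gamma> t) d" using e by (simp add: offset_def dist_norm norm_mult)
    moreover have "?z \<notin> path_image comparison_loop" using e eta_pos offset_not_on_comparison_loop by simp
    ultimately have "?z \<notin> range \<gamma>" using not_on by blast
    have "winding_number comparison_loop ?z = 0"
      using offset_outside_comparison_loop e simple_path_comparison_loop comparison_loop_closed
      by (simp add: winding_number_zero_in_outside simple_path_imp_path)
    then have "winding_number (loop_from 0) ?z \<noteq> 0"
      using split[OF \<open>?z \<in> ball (\<gamma> t) d\<close> \<open>?z \<notin> range \<gamma>\<close>] \<open>k \<noteq> 0\<close> by simp
    then have "?z \<notin> outside (range \<gamma>)"
      using winding_number_zero_in_outside[OF path_loop_from pathfinish_loop_from]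
      by (auto simp: path_image_loop_from)
    then show "?z \<in> \<Omega>"
      using \<open>?z \<notin> range \<gamma>\<close> domain_eq_inside inside_Un_outside by blast
  qed
qed

end

context jordan_domain
begin

lemma eventually_normal_offset_in_domain: "\<forall>\<^sub>F e in at_right 0. offset \<gamma> e t \<in> \<Omega>"
proof -
  obtain \<eta> where "0 < \<eta>" "4 * \<eta> < L"
    "\<And>u. \<bar>u - t\<bar> \<le> \<eta> \<Longrightarrow>
       1/2 \<le> Re (cnj (tangent \<gamma> t) * tangent \<gamma> u) \<and> \<bar>Im (cnj (tangent \<gamma> t) * tangent \<gamma> u)\<bar> \<le> 1/2"
    using tangent_locally_close[of t] by blast
  then interpret boundary_chart \<gamma> L \<Omega> t \<eta> by unfold_locales
  show ?thesis by (rule eventually_offset_in_domain)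
qed

end

section \<open>Larmor centres and the integral\<close>

locale magnetic_billiard = jordan_domain +
  fixes r :: real and a :: "nat \<Rightarrow> nat \<Rightarrow> complex \<Rightarrow> real" and N :: nat and F :: "complex \<Rightarrow> real"
  assumes r_pos: "0 < r"
    and integral: "poly_integral \<gamma> \<Omega> r a N"
    and F_continuous: "continuous_on (Omega_r_closed \<gamma> r) F"
    and F_Larmor_centre: "\<And>x v. x \<in> \<Omega> \<Longrightarrow> norm v = 1 \<Longrightarrow> \<not> sphere (x + \<i> * of_real r * v) r \<subseteq> \<Omega> \<Longrightarrow>
       F (x + \<i> * of_real r * v) = poly_mom a N x v"
begin

text \<open>Differentiable extensions of the coefficients beyond \<open>\<Omega>\<^sub>+\<close>; arbitrary for \<open>k + l > N\<close>.\<close>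

definition coeff_ext :: "nat \<Rightarrow> nat \<Rightarrow> complex \<Rightarrow> real" where
  "coeff_ext k l = (SOME g. \<forall>z\<in>Omega_plus \<gamma> r. g z = a k l z \<and> g differentiable (at z))"

lemma coeff_ext:
  assumes "k + l \<le> N" "z \<in> Omega_plus \<gamma> r"
  shows "coeff_ext k l z = a k l z" "coeff_ext k l differentiable (at z)"
proof -
  have "smooth_on_closed (Omega_plus \<gamma> r) (a k l)"
    using integral assms(1) by (simp add: poly_integral_def)
  from someI_ex[OF smooth_on_closed_extension[OF this]]
  show "coeff_ext k l z = a k l z" "coeff_ext k l differentiable (at z)"
    using assms(2) by (simp_all add: coeff_ext_def)
qed

lemma offset_in_Omega_plus: "0 \<le> e \<Longrightarrow> e \<le> 2 * r \<Longrightarrow> offset \<gamma> e s \<in> Omega_plus \<gamma> r"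
  unfolding Omega_plus_def by auto

lemma curve_in_Omega_plus: "\<gamma> s \<in> Omega_plus \<gamma> r"
  using offset_in_Omega_plus[of 0 s] r_pos by (simp add: offset_def)

lemma poly_mom_coeff_ext: "x \<in> Omega_plus \<gamma> r \<Longrightarrow> poly_mom a N x v = poly_mom coeff_ext N x v"
  by (intro poly_mom_cong) (simp add: coeff_ext)

lemma isCont_poly_mom_coeff_ext: "isCont (\<lambda>p. poly_mom coeff_ext N (fst p) (snd p)) (\<gamma> s, v)"
  using poly_mom_differentiable[of N coeff_ext "\<gamma> s" v] coeff_ext(2) curve_in_Omega_plus
  by (blast intro: differentiable_imp_continuous_within)

lemma eventually_F_Larmor_centre:
  assumes v: "norm v = 1" and near: "norm (\<gamma> t + \<i> * of_real r * v - \<gamma> t') < r"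
  shows "\<forall>\<^sub>F e in at_right 0. F (offset \<gamma> e t + \<i> * of_real r * v) = poly_mom coeff_ext N (offset \<gamma> e t) v
      \<and> offset \<gamma> e t + \<i> * of_real r * v \<in> Omega_r_closed \<gamma> r"
proof -
  let ?m = "min (r - norm (\<gamma> t + \<i> * of_real r * v - \<gamma> t')) (2 * r)"
  have "\<forall>\<^sub>F e in at_right 0. e < ?m"
    using near r_pos unfolding eventually_at_right_field by (intro exI[of _ ?m]) auto
  with eventually_normal_offset_in_domain[of t] eventually_at_right_less[of "0::real"]
  show ?thesis
  proof eventually_elim
    case (elim e)
    have "norm (offset \<gamma> e t + \<i> * of_real r * v - \<gamma> t') \<le> norm (\<gamma> t + \<i> * of_real r * v - \<gamma> t') + e"
      using norm_triangle_ineq[of "\<gamma> t + \<i> * of_real r * v - \<gamma> t'" "of_real e * normal \<gamma> t"] elim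
      by (simp add: offset_def norm_mult algebra_simps)
    then have "norm (offset \<gamma> e t + \<i> * of_real r * v - \<gamma> t') \<le> r" using elim by simp
    moreover have "offset \<gamma> e t \<in> Omega_plus \<gamma> r" using elim by (simp add: offset_in_Omega_plus)
    ultimately show ?case
      using F_Larmor_centre[of "offset \<gamma> e t" v] sphere_not_subset_domain[OF r_pos] elim v
        in_Omega_r_closedI poly_mom_coeff_ext by simp
  qed
qed

lemma F_centre_transversal:
  assumes v: "norm v = 1" and transversal: "Re (cnj (normal \<gamma> t) * v) \<noteq> 0"
  shows "F (\<gamma> t + \<i> * of_real r * v) = poly_mom a N (\<gamma> t) v"
proof -
  define c where "c = \<gamma> t + \<i> * of_real r * v"
  have "(c - \<gamma> t) \<bullet> tangent \<gamma> t = - r * Re (cnj (normal \<gamma> t) * v)"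
    by (simp add: c_def inner_complex_def normal_def algebra_simps)
  moreover have "norm (c - \<gamma> t) = r" using v r_pos by (simp add: c_def norm_mult)
  ultimately obtain t' where "norm (c - \<gamma> t') < r"
    using exists_closer_curve_point transversal r_pos by (metis mult_eq_0_iff neg_equal_0_iff_equal less_irrefl)
  then have centres: "\<forall>\<^sub>F e in at_right 0. F (offset \<gamma> e t + \<i> * of_real r * v) =
      poly_mom coeff_ext N (offset \<gamma> e t) v \<and> offset \<gamma> e t + \<i> * of_real r * v \<in> Omega_r_closed \<gamma> r"
    unfolding c_def by (rule eventually_F_Larmor_centre[OF v])
  have lim: "((\<lambda>e. offset \<gamma> e t) \<longlongrightarrow> \<gamma> t) (at_right 0)"
    unfolding offset_def by (rule tendsto_eq_intros | simp)+
  have "((\<lambda>e. F (offset \<gamma> e t + \<i> * of_real r * v)) \<longlongrightarrow> F c) (at_right 0)"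
  proof (rule continuous_on_tendsto_compose[OF F_continuous])
    show "((\<lambda>e. offset \<gamma> e t + \<i> * of_real r * v) \<longlongrightarrow> c) (at_right 0)"
      unfolding c_def by (intro tendsto_intros lim)
    show "c \<in> Omega_r_closed \<gamma> r" using v r_pos by (intro in_Omega_r_closedI[of _ t]) (simp add: c_def norm_mult)
  qed (use centres in \<open>auto elim: eventually_mono\<close>)
  moreover have "((\<lambda>e. poly_mom coeff_ext N (offset \<gamma> e t) v) \<longlongrightarrow> poly_mom coeff_ext N (\<gamma> t) v) (at_right 0)"
    using isCont_tendsto_compose[OF isCont_poly_mom_coeff_ext[of t v], of "\<lambda>e. (offset \<gamma> e t, v)"] lim
    by (simp add: tendsto_Pair)
  then have "((\<lambda>e. F (offset \<gamma> e t + \<i> * of_real r * v)) \<longlongrightarrow> poly_mom coeff_ext N (\<gamma> t) v) (at_right 0)"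
    by (rule Lim_transform_eventually) (use centres in \<open>auto elim: eventually_mono\<close>)
  ultimately have "F c = poly_mom coeff_ext N (\<gamma> t) v"
    using tendsto_unique[OF trivial_limit_at_right_real] by blast
  then show ?thesis using poly_mom_coeff_ext[OF curve_in_Omega_plus] by (simp add: c_def)
qed

lemma F_centre_boundary:
  assumes v: "norm v = 1"
  shows "F (\<gamma> t + \<i> * of_real r * v) = poly_mom a N (\<gamma> t) v"
proof (cases "Re (cnj (normal \<gamma> t) * v) = 0")
  case True
  define w where "w = (\<lambda>\<theta>. v * cis \<theta>)"
  have w_unit: "norm (w \<theta>) = 1" for \<theta> using v by (simp add: w_def norm_mult)
  define z where "z = cnj (normal \<gamma> t) * v"
  have "norm z = 1" using v by (simp add: z_def norm_mult)
  then have "z \<noteq> 0" by auto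
  then have "Im z \<noteq> 0" using True by (simp add: z_def[symmetric] complex_eq_iff)
  have "Re (cnj (normal \<gamma> t) * w \<theta>) \<noteq> 0" if "0 < \<theta>" "\<theta> < 1" for \<theta>
  proof -
    have "Re (cnj (normal \<gamma> t) * w \<theta>) = - Im z * sin \<theta>"
      using True by (simp add: w_def z_def[symmetric] mult.assoc[symmetric])
    moreover have "0 < sin \<theta>" using that pi_gt3 by (intro sin_gt_zero) auto
    ultimately show ?thesis using \<open>Im z \<noteq> 0\<close> by simp
  qed
  then have "\<forall>\<^sub>F \<theta> in at_right 0. Re (cnj (normal \<gamma> t) * w \<theta>) \<noteq> 0"
    unfolding eventually_at_right_field by (intro exI[of _ 1]) auto
  then have eq: "\<forall>\<^sub>F \<theta> in at_right 0. F (\<gamma> t + \<i> * of_real r * w \<theta>) = poly_mom a N (\<gamma> t) (w \<theta>)"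
    by eventually_elim (rule F_centre_transversal[OF w_unit])
  have w_lim: "(w \<longlongrightarrow> v) (at_right 0)"
    unfolding w_def by (rule tendsto_eq_intros | simp)+
  have centre: "\<gamma> t + \<i> * of_real r * u \<in> Omega_r_closed \<gamma> r" if "norm u = 1" for u
    using that r_pos by (intro in_Omega_r_closedI[of _ t]) (simp add: norm_mult)
  have "((\<lambda>\<theta>. F (\<gamma> t + \<i> * of_real r * w \<theta>)) \<longlongrightarrow> F (\<gamma> t + \<i> * of_real r * v)) (at_right 0)"
  proof (rule continuous_on_tendsto_compose[OF F_continuous])
    show "((\<lambda>\<theta>. \<gamma> t + \<i> * of_real r * w \<theta>) \<longlongrightarrow> \<gamma> t + \<i> * of_real r * v) (at_right 0)"
      by (intro tendsto_intros w_lim)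
  qed (use centre w_unit v in auto)
  moreover have "((\<lambda>\<theta>. F (\<gamma> t + \<i> * of_real r * w \<theta>)) \<longlongrightarrow> poly_mom a N (\<gamma> t) v) (at_right 0)"
    using tendsto_poly_mom_momentum[OF w_lim] eq by (rule Lim_transform_eventually[OF _ eventually_mono]) simp
  ultimately show ?thesis using tendsto_unique[OF trivial_limit_at_right_real] by blast
qed (use F_centre_transversal v in blast)

definition Phi_boundary :: "real \<times> complex \<Rightarrow> real" where
  "Phi_boundary p = poly_mom coeff_ext N (\<gamma> (fst p)) (snd p)"

lemma Phi_boundary_eq: "Phi_boundary (s, v) = poly_mom a N (\<gamma> s) v"
  by (simp add: Phi_boundary_def poly_mom_coeff_ext[OF curve_in_Omega_plus])

lemma Phi_boundary_differentiable: "Phi_boundary differentiable (at p)"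
proof -
  obtain s v where p: "p = (s, v)" by fastforce
  have "((\<lambda>q. \<gamma> (fst q)) has_derivative (\<lambda>h. fst h *\<^sub>R tangent \<gamma> s)) (at (s, v))"
    using curve_has_derivative[of s] unfolding has_vector_derivative_def
    by (intro has_derivative_compose[of fst fst, OF bounded_linear_imp_has_derivative[OF bounded_linear_fst]])
      simp
  then have "((\<lambda>q. (\<gamma> (fst q), snd q)) has_derivative (\<lambda>h. (fst h *\<^sub>R tangent \<gamma> s, snd h))) (at (s, v))"
    by (intro has_derivative_Pair bounded_linear_imp_has_derivative[OF bounded_linear_snd])
  then have "(\<lambda>q. (\<gamma> (fst q), snd q)) differentiable (at (s, v))" by (auto simp: differentiable_def)
  moreover have "(\<lambda>p. poly_mom coeff_ext N (fst p) (snd p)) differentiable (at (\<gamma> s, v))"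
    by (intro poly_mom_differentiable coeff_ext(2) curve_in_Omega_plus)
  ultimately have "((\<lambda>p. poly_mom coeff_ext N (fst p) (snd p)) \<circ> (\<lambda>q. (\<gamma> (fst q), snd q)))
      differentiable (at (s, v))"
    using differentiable_chain_at[of "\<lambda>q. (\<gamma> (fst q), snd q)" "(s, v)"] by simp
  then show ?thesis unfolding p Phi_boundary_def[abs_def] by (simp add: o_def)
qed

lemma Phi_boundary_common_centre:
  assumes "norm v1 = 1" "norm v2 = 1" "\<gamma> s1 + \<i> * of_real r * v1 = \<gamma> s2 + \<i> * of_real r * v2"
  shows "Phi_boundary (s1, v1) = Phi_boundary (s2, v2)"
  using F_centre_boundary[OF assms(1), of s1] F_centre_boundary[OF assms(2), of s2] assms(3)
  by (simp add: Phi_boundary_eq)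

lemma reflect_rotated_tangent:
  "reflect (normal \<gamma> t) (of_real \<sigma> * tangent \<gamma> t * cis \<theta>) = of_real \<sigma> * tangent \<gamma> t * cis (- \<theta>)"
proof -
  have "cnj (normal \<gamma> t) * (of_real \<sigma> * tangent \<gamma> t * cis \<theta>) =
      - \<i> * of_real \<sigma> * (cnj (tangent \<gamma> t) * tangent \<gamma> t) * cis \<theta>"
    by (simp add: normal_def ac_simps)
  then have "Re (cnj (normal \<gamma> t) * (of_real \<sigma> * tangent \<gamma> t * cis \<theta>)) = \<sigma> * sin \<theta>" by simp
  then have "reflect (normal \<gamma> t) (of_real \<sigma> * tangent \<gamma> t * cis \<theta>) =
      of_real \<sigma> * tangent \<gamma> t * cis \<theta> - 2 * of_real (\<sigma> * sin \<theta>) * (\<i> * tangent \<gamma> t)"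
    unfolding reflect_def by (simp add: normal_def)
  also have "\<dots> = of_real \<sigma> * tangent \<gamma> t * (cis \<theta> - 2 * \<i> * of_real (sin \<theta>))"
    by (simp add: algebra_simps)
  also have "cis \<theta> - 2 * \<i> * of_real (sin \<theta>) = cis (- \<theta>)" by (simp add: complex_eq_iff)
  finally show ?thesis .
qed

lemma Phi_boundary_reflection:
  assumes "\<bar>\<sigma>\<bar> = 1"
  shows "Phi_boundary (t, of_real \<sigma> * tangent \<gamma> t * cis \<theta>) = Phi_boundary (t, of_real \<sigma> * tangent \<gamma> t * cis (- \<theta>))"
proof -
  have "norm (of_real \<sigma> * tangent \<gamma> t * cis \<theta>) = 1" using assms by (simp add: norm_mult)
  then show ?thesis
    using integral reflect_rotated_tangent[of t \<sigma> \<theta>] by (simp add: poly_integral_def Phi_boundary_eq)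
qed

lemma Phi_boundary_derivative_normal:
  assumes "\<bar>\<sigma>\<bar> = 1" and D: "(Phi_boundary has_derivative D) (at (t, of_real \<sigma> * tangent \<gamma> t))"
  shows "D (0, \<i> * tangent \<gamma> t) = 0"
proof -
  let ?w = "of_real \<sigma> * tangent \<gamma> t"
  have "((\<lambda>\<theta>. (t, ?w * cis \<theta>)) has_derivative (\<lambda>h. (0, ?w * (h *\<^sub>R (\<i> * cis 0))))) (at 0)"
    by (intro has_derivative_Pair has_derivative_const has_derivative_mult_right has_derivative_cis
        has_derivative_ident)
  moreover have "(\<lambda>h. (0::real, ?w * (h *\<^sub>R (\<i> * cis 0)))) = (\<lambda>h. h *\<^sub>R (0, \<i> * ?w))"
    by (auto simp: fun_eq_iff scaleR_conv_of_real)
  ultimately have p: "((\<lambda>\<theta>. (t, ?w * cis \<theta>)) has_vector_derivative (0, \<i> * ?w)) (at 0)"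
    unfolding has_vector_derivative_def by simp
  have "((\<lambda>\<theta>. (t, ?w * cis (- \<theta>))) has_derivative (\<lambda>h. (0, ?w * ((- h) *\<^sub>R (\<i> * cis (- 0)))))) (at 0)"
    by (intro has_derivative_Pair has_derivative_const has_derivative_mult_right has_derivative_cis
        has_derivative_minus has_derivative_ident)
  moreover have "(\<lambda>h. (0::real, ?w * ((- h) *\<^sub>R (\<i> * cis (- 0))))) = (\<lambda>h. h *\<^sub>R - (0, \<i> * ?w))"
    by (auto simp: fun_eq_iff scaleR_conv_of_real)
  ultimately have q: "((\<lambda>\<theta>. (t, ?w * cis (- \<theta>))) has_vector_derivative - (0, \<i> * ?w)) (at 0)"
    unfolding has_vector_derivative_def by simp
  have Dw: "D (0, \<i> * ?w) = 0"
  proof (rule has_derivative_zero_if_symmetric[OF D p _ q])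
    show "Phi_boundary (t, ?w * cis \<theta>) = Phi_boundary (t, ?w * cis (- \<theta>))" for \<theta>
      by (rule Phi_boundary_reflection[OF assms(1)])
  qed simp_all
  have "of_real \<sigma> * (\<i> * ?w) = of_real (\<sigma> * \<sigma>) * (\<i> * tangent \<gamma> t)"
    by (simp only: of_real_mult ac_simps)
  also have "\<dots> = \<i> * tangent \<gamma> t" using assms(1) abs_mult_self_eq[of \<sigma>] by simp
  finally have "(0::real, \<i> * tangent \<gamma> t) = \<sigma> *\<^sub>R (0, \<i> * ?w)" by (simp add: scaleR_conv_of_real)
  then show ?thesis
    using linear_scale[OF has_derivative_linear[OF D], of \<sigma> "(0, \<i> * ?w)"] Dw by simp
qed

lemma Phi_boundary_derivative_chord:
  assumes "\<bar>\<sigma>\<bar> = 1" and D: "(Phi_boundary has_derivative D) (at (t, of_real \<sigma> * tangent \<gamma> t))"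
  shows "D (1, \<i> * tangent \<gamma> t / of_real r) = 0"
proof -
  let ?T = "tangent \<gamma> t"
  obtain C \<delta>0 where "0 < \<delta>0" and chords: "\<And>\<delta>. 0 < \<delta> \<Longrightarrow> \<delta> \<le> \<delta>0 \<Longrightarrow> \<exists>v1 v2. norm v1 = 1 \<and> norm v2 = 1 \<and>
        \<gamma> t + \<i> * of_real r * v1 = \<gamma> (t + \<delta>) + \<i> * of_real r * v2 \<and>
        norm (v1 - of_real \<sigma> * ?T) \<le> C * \<delta> \<and> norm (v2 - of_real \<sigma> * ?T) \<le> C * \<delta> \<and>
        norm (v2 - v1 - \<delta> *\<^sub>R (\<i> * ?T / of_real r)) \<le> C * \<delta>\<^sup>2"
    using common_centre_unit_vectors[OF r_pos assms(1), of t] by blast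
  show ?thesis
  proof (rule has_derivative_zero_along_level_chords[OF D \<open>0 < \<delta>0\<close>, of "C + 1"])
    fix \<delta> :: real assume \<delta>: "0 < \<delta>" "\<delta> \<le> \<delta>0"
    then obtain v1 v2 where v: "norm v1 = 1" "norm v2 = 1"
      "\<gamma> t + \<i> * of_real r * v1 = \<gamma> (t + \<delta>) + \<i> * of_real r * v2"
      "norm (v1 - of_real \<sigma> * ?T) \<le> C * \<delta>" "norm (v2 - of_real \<sigma> * ?T) \<le> C * \<delta>"
      "norm (v2 - v1 - \<delta> *\<^sub>R (\<i> * ?T / of_real r)) \<le> C * \<delta>\<^sup>2"
      using chords by blast
    have "norm ((t, v1) - (t, of_real \<sigma> * ?T)) \<le> (C + 1) * \<delta>"
      using v(4) \<delta>(1) by (simp add: norm_Pair algebra_simps)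
    moreover have "norm ((t + \<delta>, v2) - (t, of_real \<sigma> * ?T)) \<le> (C + 1) * \<delta>"
      using norm_Pair_le[of \<delta> "v2 - of_real \<sigma> * ?T"] v(5) \<delta>(1) by (simp add: algebra_simps)
    moreover have "norm ((t + \<delta>, v2) - (t, v1) - \<delta> *\<^sub>R (1, \<i> * ?T / of_real r)) \<le> (C + 1) * \<delta>\<^sup>2"
    proof -
      have "(t + \<delta>, v2) - (t, v1) - \<delta> *\<^sub>R (1, \<i> * ?T / of_real r) = (0, v2 - v1 - \<delta> *\<^sub>R (\<i> * ?T / of_real r))"
        by simp
      then have "norm ((t + \<delta>, v2) - (t, v1) - \<delta> *\<^sub>R (1, \<i> * ?T / of_real r)) \<le> C * \<delta>\<^sup>2"
        using v(6) by (simp add: norm_Pair)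
      also have "\<dots> \<le> (C + 1) * \<delta>\<^sup>2" by (simp add: algebra_simps)
      finally show ?thesis .
    qed
    ultimately show "\<exists>y z. Phi_boundary y = Phi_boundary z \<and>
        norm (y - (t, of_real \<sigma> * ?T)) \<le> (C + 1) * \<delta> \<and> norm (z - (t, of_real \<sigma> * ?T)) \<le> (C + 1) * \<delta> \<and>
        norm (z - y - \<delta> *\<^sub>R (1, \<i> * ?T / of_real r)) \<le> (C + 1) * \<delta>\<^sup>2"
      using Phi_boundary_common_centre[OF v(1,2,3)] by blast
  qed
qed

lemma Phi_boundary_constant_along_tangent:
  assumes "\<bar>\<sigma>\<bar> = 1"
  obtains C where "\<And>s. Phi_boundary (s, of_real \<sigma> * tangent \<gamma> s) = C"
proof -
  have "((\<lambda>s. Phi_boundary (s, of_real \<sigma> * tangent \<gamma> s)) has_real_derivative 0) (at t)" for t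
  proof -
    let ?T = "tangent \<gamma> t"
    obtain D where D: "(Phi_boundary has_derivative D) (at (t, of_real \<sigma> * ?T))"
      using Phi_boundary_differentiable by (auto simp: differentiable_def)
    have lin: "linear D" using D by (rule has_derivative_linear)
    obtain \<mu> where \<mu>: "acceleration t = of_real \<mu> * (\<i> * ?T)"
      using orthogonal_to_unit_eq[OF norm_tangent tangent_orthogonal_acceleration] by blast
    have lift: "((\<lambda>s. (s, of_real \<sigma> * tangent \<gamma> s)) has_derivative
        (\<lambda>h. (h, of_real \<sigma> * (h *\<^sub>R acceleration t)))) (at t)"
      using tangent_has_derivative[of t] unfolding has_vector_derivative_def
      by (intro has_derivative_Pair has_derivative_ident has_derivative_mult_right)
    have zero: "D (h, of_real \<sigma> * (h *\<^sub>R acceleration t)) = 0" for h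
    proof -
      have "(h, of_real \<sigma> * (h *\<^sub>R acceleration t)) =
          h *\<^sub>R (1, \<i> * ?T / of_real r) + (h * (\<sigma> * \<mu> - 1 / r)) *\<^sub>R (0, \<i> * ?T)"
        by (simp add: \<mu> scaleR_conv_of_real algebra_simps diff_divide_distrib)
      moreover have "D (h *\<^sub>R (1, \<i> * ?T / of_real r) + (h * (\<sigma> * \<mu> - 1 / r)) *\<^sub>R (0, \<i> * ?T)) = 0"
        using Phi_boundary_derivative_chord[OF assms D] Phi_boundary_derivative_normal[OF assms D]
        by (simp only: linear_add[OF lin] linear_scale[OF lin]) simp
      ultimately show ?thesis by (simp only:)
    qed
    have "((\<lambda>s. Phi_boundary (s, of_real \<sigma> * tangent \<gamma> s)) has_derivative
        (\<lambda>h. D (h, of_real \<sigma> * (h *\<^sub>R acceleration t)))) (at t)"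
      by (rule has_derivative_compose[OF lift D])
    then have "((\<lambda>s. Phi_boundary (s, of_real \<sigma> * tangent \<gamma> s)) has_derivative (\<lambda>h. 0)) (at t)"
      by (simp only: zero)
    moreover have "(*) (0::real) = (\<lambda>h. 0)" by auto
    ultimately show ?thesis by (simp add: has_field_derivative_def)
  qed
  then have "Phi_boundary (s, of_real \<sigma> * tangent \<gamma> s) = Phi_boundary (0, of_real \<sigma> * tangent \<gamma> 0)" for s
    by (intro DERIV_isconst_all) blast
  then show thesis by (rule that)
qed

lemma F_constant_on_parallel_curve:
  assumes "\<bar>\<sigma>\<bar> = 1"
  obtains C where "\<And>s. F (offset \<gamma> (\<sigma> * r) s) = C"
proof -
  obtain C where C: "\<And>s. Phi_boundary (s, of_real \<sigma> * tangent \<gamma> s) = C"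
    using Phi_boundary_constant_along_tangent[OF assms] by blast
  have "F (offset \<gamma> (\<sigma> * r) s) = C" for s
  proof -
    have "offset \<gamma> (\<sigma> * r) s = \<gamma> s + \<i> * of_real r * (of_real \<sigma> * tangent \<gamma> s)"
      by (simp add: offset_def normal_def)
    moreover have "norm (of_real \<sigma> * tangent \<gamma> s) = 1" using assms by (simp add: norm_mult)
    ultimately show ?thesis using F_centre_boundary C[of s] by (simp add: Phi_boundary_eq)
  qed
  then show thesis by (rule that)
qed

end

theorem proposition2p5:
  fixes \<gamma> :: "real \<Rightarrow> complex" and L r :: real and \<Omega> :: "complex set"
    and a :: "nat \<Rightarrow> nat \<Rightarrow> complex \<Rightarrow> real" and N :: nat and F :: "complex \<Rightarrow> real"
  assumes L_pos: "0 < L"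
    and smooth: "smooth_curve \<gamma>"
    and periodic: "\<forall>t. \<gamma> (t + L) = \<gamma> t"
    and simple: "inj_on \<gamma> {0..<L}"
    and arclength: "\<forall>t. norm (tangent \<gamma> t) = 1"
    and domain: "open \<Omega>" "connected \<Omega>" "bounded \<Omega>"
    and boundary: "frontier \<Omega> = \<gamma> ` {0..L}"
    and ccw: "\<forall>z\<in>\<Omega>. winding_number (\<lambda>u. \<gamma> (L * u)) z = 1"
    and r_pos: "0 < r"
    and curv: "r < tubular_radius \<gamma> L / 2"
    and integral: "poly_integral \<gamma> \<Omega> r a N"
    and F_cont: "continuous_on (Omega_r_closed \<gamma> r) F"
    and F_def: "\<forall>x v. x \<in> \<Omega> \<and> norm v = 1 \<and> \<not> sphere (x + \<i> * of_real r * v) r \<subseteq> \<Omega> \<longrightarrow>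
                  F (x + \<i> * of_real r * v) = poly_mom a N x v"
  shows "(\<exists>C. \<forall>t. F (offset \<gamma> r t) = C) \<and> (\<exists>C. \<forall>t. F (offset \<gamma> (-r) t) = C)"
proof -
  interpret unit_speed_loop \<gamma> L
    using L_pos smooth periodic simple arclength by unfold_locales auto
  have "loop_from 0 = (\<lambda>u. \<gamma> (L * u))" by (simp add: fun_eq_iff loop_from_def)
  then interpret magnetic_billiard \<gamma> L \<Omega> r a N F
    using domain(1) boundary ccw r_pos integral F_cont F_def by unfold_locales (auto simp: range_curve)
  obtain C1 where "\<And>t. F (offset \<gamma> r t) = C1"
    using F_constant_on_parallel_curve[of 1] by auto
  moreover obtain C2 where "\<And>t. F (offset \<gamma> (- r) t) = C2"
    using F_constant_on_parallel_curve[of "- 1"] by auto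
  ultimately show ?thesis by auto
qed

end
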